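(* Let $\Lambda\subset\mathbb Z$ be a finite interval, $X,Y\subset\Lambda$ subintervals with $\operatorname{dist}(X,Y)\ge20$, $R\in\mathcal R_\Lambda$ a root tiling, $\lambda\in\mathbb C\setminus\{0\}$ and $\kappa>0$. Then for all even observables $A_1\in\mathcal A^e_X$, $A_2\in\mathcal A^e_Y$, $$\big|\omega^\Lambda_R(A_1A_2)-\omega^\Lambda_R(A_1)\,\omega^\Lambda_R(A_2)\big|\le8\|A_1\|\|A_2\|\,e^{-c(\lambda)(\operatorname{dist}(X,Y)-20)/2},$$ where $c(\lambda)=\frac13\ln\frac{\sqrt{4|\lambda|^2+1}+1}{\sqrt{4|\lambda|^2+1}-1}$. Moreover, for every odd observable $A_1\in\mathcal A^o_X$ and every observable $A_2\in\mathcal A_Y$, $\omega^\Lambda_R(A_1A_2)=\omega^\Lambda_R(A_1)=0$.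
   Context: Let $\Lambda=[a,b]$ and $\mathcal F_\Lambda$ be the fermionic Fock space over $\ell^2(\Lambda)$ with CAR operators $c_x,c_x^*$ and vacuum $|\emptyset\rangle$. For $X\subset\Lambda$, $\mathcal A_X$ is the algebra generated by $c_x,c_x^*$, $x\in X$; $\mathcal A^e_X$ ($\mathcal A^o_X$) is the subspace spanned by even (odd) monomials in these operators. Tilings: a tile occupies consecutive sites and carries a 0/1 word (its particle content): void $0$; monomer $100$; dimer $011000$; left boundary dimer $11000$ (allowed only as the first tile of $\Lambda$); and, allowed only as the last tile of $\Lambda$: right dimer $011$, right 1-monomer $1$, right 2-monomer $10$, truncated 1-dimer $0110$, truncated 2-dimer $01100$. A root tiling $R$ of $\Lambda$ is a tiling of $\Lambda$ by consecutive tiles consisting of voids and monomers, optionally with a left boundary dimer as first tile and optionally with one of right dimer, right 1-monomer, right 2-monomer as last tile; $\mathcal R_\Lambda$ is the set of root tilings. A VMD tiling derived from $R$ is obtained by choosing a collection of disjoint pairs of consecutive tiles of $R$, each pair being either two monomers (replaced by a dimer) or a monomer followed by a right $j$-monomer, $j\in\{1,2\}$ (replaced by the truncated $j$-dimer); $\mathcal D_\Lambda(R)$ is the set of all such tilings (including $R$ itself). For a tile $D$ let $C_D^*$ be the product of $c_x^*$ over the sites $x$ of $D$ carrying a $1$, in increasing order of $x$ (and $C_D^*=1$ for a void), multiplied by $\lambda$ if $D$ is a dimer, left/right boundary dimer or truncated dimer. The fermionic VMD state is $\psi_\Lambda(R)=\sum_{(D_1,\dots,D_N)\in\mathcal D_\Lambda(R)}C_{D_1}^*\cdots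 C_{D_N}^*|\emptyset\rangle$ (tiles listed left to right), and $\omega^\Lambda_R(A)=\langle\psi_\Lambda(R),A\psi_\Lambda(R)\rangle/\|\psi_\Lambda(R)\|^2$. *)

theory Defs
  imports Complex_Main
begin

text \<open>A vector of the Fock space F_Lambda is represented by its coefficients in the
occupation-number basis |S>, S a subset of Lambda; we use functions on all sets of
integers but only the values on Pow Lambda are ever used (inner products and norms
sum over Pow Lambda).\<close>

type_synonym fvec = "int set \<Rightarrow> complex"
type_synonym fop = "fvec \<Rightarrow> fvec"

definition jw_sign :: "int set \<Rightarrow> int \<Rightarrow> complex" where
  "jw_sign S x = (-1) ^ card {y \<in> S. y < x}"

definition cre :: "int \<Rightarrow> fop" where
  "cre x \<psi> = (\<lambda>S. if x \<in> S then jw_sign S x * \<psi> (S - {x}) else 0)"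

definition ann :: "int \<Rightarrow> fop" where
  "ann x \<psi> = (\<lambda>S. if x \<notin> S then jw_sign S x * \<psi> (insert x S) else 0)"

definition vac :: fvec where
  "vac = (\<lambda>S. if S = {} then 1 else 0)"

definition finner :: "int set \<Rightarrow> fvec \<Rightarrow> fvec \<Rightarrow> complex" where
  "finner \<Lambda> \<phi> \<psi> = (\<Sum>S\<in>Pow \<Lambda>. cnj (\<phi> S) * \<psi> S)"

definition fnorm :: "int set \<Rightarrow> fvec \<Rightarrow> real" where
  "fnorm \<Lambda> \<psi> = sqrt (\<Sum>S\<in>Pow \<Lambda>. (cmod (\<psi> S))\<^sup>2)"

definition opnorm :: "int set \<Rightarrow> fop \<Rightarrow> real" where
  "opnorm \<Lambda> A = Sup ((\<lambda>\<psi>. fnorm \<Lambda> (A \<psi>)) ` {\<psi>. fnorm \<Lambda> \<psi> \<le> 1})"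

text \<open>A monomial is a word of letters (True, x) = c_x^*, (False, x) = c_x; the word is
the operator product read left to right.\<close>
fun op_word :: "(bool \<times> int) list \<Rightarrow> fop" where
  "op_word [] = id"
| "op_word ((b, x) # w) = (if b then cre x else ann x) \<circ> op_word w"

definition op_span :: "((bool \<times> int) list \<Rightarrow> bool) \<Rightarrow> fop set" where
  "op_span P = {A. \<exists>(n::nat) (coef :: nat \<Rightarrow> complex) ws.
      (\<forall>i<n. P (ws i)) \<and> A = (\<lambda>\<psi> S. \<Sum>i<n. coef i * op_word (ws i) \<psi> S)}"

definition word_in :: "int set \<Rightarrow> (bool \<times> int) list \<Rightarrow> bool" where
  "word_in X w \<longleftrightarrow> (\<forall>p\<in>set w. snd p \<in> X)"

definition obs_alg :: "int set \<Rightarrow> fop set" where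
  "obs_alg X = op_span (word_in X)"

definition obs_even :: "int set \<Rightarrow> fop set" where
  "obs_even X = op_span (\<lambda>w. word_in X w \<and> even (length w))"

definition obs_odd :: "int set \<Rightarrow> fop set" where
  "obs_odd X = op_span (\<lambda>w. word_in X w \<and> odd (length w))"

datatype tile = Void | Mono | Dimer | LDimer | RDimer | RMono1 | RMono2 | TDimer1 | TDimer2

text \<open>Particle content (True = 1, False = 0).\<close>
fun tword :: "tile \<Rightarrow> bool list" where
  "tword Void = [False]"
| "tword Mono = [True, False, False]"
| "tword Dimer = [False, True, True, False, False, False]"
| "tword LDimer = [True, True, False, False, False]"
| "tword RDimer = [False, True, True]"
| "tword RMono1 = [True]"
| "tword RMono2 = [True, False]"
| "tword TDimer1 = [False, True, True, False]"
| "tword TDimer2 = [False, True, True, False, False]"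

definition tlen :: "tile \<Rightarrow> nat" where
  "tlen t = length (tword t)"

text \<open>Root tilings of [a,b]: tiles listed left to right.\<close>
definition root_tiling :: "int \<Rightarrow> int \<Rightarrow> tile list \<Rightarrow> bool" where
  "root_tiling a b R \<longleftrightarrow>
     int (sum_list (map tlen R)) = b - a + 1 \<and>
     (\<forall>i<length R. R ! i \<in> {Void, Mono}
        \<or> (i = 0 \<and> R ! i = LDimer)
        \<or> (i = length R - 1 \<and> R ! i \<in> {RDimer, RMono1, RMono2}))"

fun derived :: "tile list \<Rightarrow> tile list set" where
  "derived [] = {[]}"
| "derived [t] = {[t]}"
| "derived (t1 # t2 # ts) =
     (Cons t1 ` derived (t2 # ts)) \<union>
     (if t1 = Mono \<and> t2 = Mono then Cons Dimer ` derived ts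
      else if t1 = Mono \<and> t2 = RMono1 then Cons TDimer1 ` derived ts
      else if t1 = Mono \<and> t2 = RMono2 then Cons TDimer2 ` derived ts
      else {})"

definition tile_weight :: "complex \<Rightarrow> tile \<Rightarrow> complex" where
  "tile_weight lam t = (if t \<in> {Dimer, LDimer, RDimer, TDimer1, TDimer2} then lam else 1)"

fun cre_word :: "int \<Rightarrow> bool list \<Rightarrow> fop" where
  "cre_word p [] = id"
| "cre_word p (True # w) = cre p \<circ> cre_word (p + 1) w"
| "cre_word p (False # w) = cre_word (p + 1) w"

fun tiles_op :: "complex \<Rightarrow> int \<Rightarrow> tile list \<Rightarrow> fop" where
  "tiles_op lam p [] = id"
| "tiles_op lam p (t # ts) =
     (\<lambda>\<psi> S. tile_weight lam t * (cre_word p (tword t) \<circ> tiles_op lam (p + int (tlen t)) ts) \<psi> S)"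

definition vmd_state :: "complex \<Rightarrow> int \<Rightarrow> tile list \<Rightarrow> fvec" where
  "vmd_state lam a R = (\<lambda>S. \<Sum>D\<in>derived R. tiles_op lam a D vac S)"

definition omega :: "complex \<Rightarrow> int \<Rightarrow> int \<Rightarrow> tile list \<Rightarrow> fop \<Rightarrow> complex" where
  "omega lam a b R A =
     finner {a..b} (vmd_state lam a R) (A (vmd_state lam a R)) /
     finner {a..b} (vmd_state lam a R) (vmd_state lam a R)"

definition corr_rate :: "complex \<Rightarrow> real" where
  "corr_rate lam = (1/3) * ln ((sqrt (4 * (cmod lam)\<^sup>2 + 1) + 1) / (sqrt (4 * (cmod lam)\<^sup>2 + 1) - 1))"

definition set_dist :: "int set \<Rightarrow> int set \<Rightarrow> int" where
  "set_dist X Y = Min {\<bar>x - y\<bar> | x y. x \<in> X \<and> y \<in> Y}"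

end

(*
  Expanding the VMD state over the ways of merging monomers of the root tiling into dimers writes
  it as a superposition of occupation-number basis vectors with product weights.  An even
  observable localized in an interval acts on these through a kernel that only sees the
  occupations inside the interval: each letter of a monomial picks up the same Jordan-Wigner sign
  from the particles left of the interval, and in an even monomial these signs cancel.

  Between two intervals at distance at least 20 the root tiling contains a block consisting of a
  single void or of an even number m of monomers.  Conditioning on the two boundary flags of the
  block (whether a dimer crosses its left or its right end) factorizes all expectations, and the
  covariance is bounded by the determinant of the 2 x 2 matrix of boundary weights of the block,
  relative to the product of its diagonal entries.  For a void this determinant vanishes.  For m
  monomers the weights are Fibonacci polynomials in |lam|^2; Cassini's identity and Binet's
  formula bound the ratio by 4 r^(m-1) with r = (s - 1) / (s + 1), s = sqrt (1 + 4 |lam|^2),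
  and r = exp (-3 c(lam)); since m can be taken with 6 (m - 1) >= dist(X,Y) - 20, this is the
  claimed decay.

  An odd observable in X changes the parity of the number of particles in X, whereas two
  configurations of the state that agree outside X and Y (separated by such a block) carry the
  same number of particles in X.  Hence odd expectations vanish.
*)

theory Submission
  imports Defs "HOL-Analysis.Convex"
begin

section \<open>Norms and inner products on the Fock space\<close>

lemma fnorm_cong: "(\<And>S. S \<subseteq> \<Lambda> \<Longrightarrow> f S = g S) \<Longrightarrow> fnorm \<Lambda> f = fnorm \<Lambda> g"
  unfolding fnorm_def by (metis (no_types, lifting) PowD sum.cong)

lemma fnorm_nonneg: "0 \<le> fnorm \<Lambda> f"
  unfolding fnorm_def by (rule real_sqrt_ge_zero, rule sum_nonneg) simp

lemma fnorm_sq: "(fnorm \<Lambda> f)\<^sup>2 = (\<Sum>S\<in>Pow \<Lambda>. (cmod (f S))\<^sup>2)"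
proof -
  have "0 \<le> (\<Sum>S\<in>Pow \<Lambda>. (cmod (f S))\<^sup>2)" by (rule sum_nonneg) simp
  then show ?thesis unfolding fnorm_def by simp
qed

lemma fnorm_scale: "fnorm \<Lambda> (\<lambda>S. c * f S) = cmod c * fnorm \<Lambda> f"
proof -
  have "(\<Sum>S\<in>Pow \<Lambda>. (cmod (c * f S))\<^sup>2) = (cmod c)\<^sup>2 * (\<Sum>S\<in>Pow \<Lambda>. (cmod (f S))\<^sup>2)"
    by (simp add: norm_mult power_mult_distrib sum_distrib_left)
  then show ?thesis unfolding fnorm_def by (simp add: real_sqrt_mult)
qed

lemma norm_le_fnorm: "finite \<Lambda> \<Longrightarrow> U \<subseteq> \<Lambda> \<Longrightarrow> cmod (f U) \<le> fnorm \<Lambda> f"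
proof -
  assume "finite \<Lambda>" "U \<subseteq> \<Lambda>"
  then have "(cmod (f U))\<^sup>2 \<le> (\<Sum>S\<in>Pow \<Lambda>. (cmod (f S))\<^sup>2)"
    by (intro member_le_sum) auto
  then show ?thesis unfolding fnorm_def by (simp add: real_le_rsqrt)
qed

lemma fnorm_eq_0D: "finite \<Lambda> \<Longrightarrow> fnorm \<Lambda> f = 0 \<Longrightarrow> S \<subseteq> \<Lambda> \<Longrightarrow> f S = 0"
  using norm_le_fnorm[of \<Lambda> S f] by simp

lemma finner_self: "finner \<Lambda> f f = complex_of_real ((fnorm \<Lambda> f)\<^sup>2)"
proof -
  have "finner \<Lambda> f f = (\<Sum>S\<in>Pow \<Lambda>. complex_of_real ((cmod (f S))\<^sup>2))"
    unfolding finner_def by (intro sum.cong refl) (metis complex_norm_square mult.commute)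
  also have "\<dots> = complex_of_real ((fnorm \<Lambda> f)\<^sup>2)" by (simp add: fnorm_sq)
  finally show ?thesis .
qed

lemma norm_finner_le: "cmod (finner \<Lambda> f g) \<le> fnorm \<Lambda> f * fnorm \<Lambda> g"
proof -
  have "cmod (finner \<Lambda> f g) \<le> (\<Sum>S\<in>Pow \<Lambda>. cmod (f S) * cmod (g S))"
    unfolding finner_def by (rule order_trans[OF norm_sum]) (simp add: norm_mult)
  also have "\<dots> \<le> fnorm \<Lambda> f * fnorm \<Lambda> g"
  proof (rule power2_le_imp_le)
    show "(\<Sum>S\<in>Pow \<Lambda>. cmod (f S) * cmod (g S))\<^sup>2 \<le> (fnorm \<Lambda> f * fnorm \<Lambda> g)\<^sup>2"
      unfolding power_mult_distrib fnorm_sq by (rule Cauchy_Schwarz_ineq_sum)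
  qed (simp add: fnorm_nonneg)
  finally show ?thesis .
qed

lemma finner_sum_right:
  "finner \<Lambda> \<phi> (\<lambda>S. \<Sum>i\<in>I. c i * f i S) = (\<Sum>i\<in>I. c i * finner \<Lambda> \<phi> (f i))"
  unfolding finner_def by (simp add: sum_distrib_left sum.swap[of _ I] mult_ac)

section \<open>Kernels of monomials and local observables\<close>

lemma sum_Pow_Un_disjoint:
  assumes "X \<inter> Y = {}"
  shows "(\<Sum>T\<in>Pow (X \<union> Y). h (T \<inter> X) (T \<inter> Y)) = (\<Sum>T1\<in>Pow X. \<Sum>T2\<in>Pow Y. h T1 T2)"
proof -
  have "(\<Sum>T\<in>Pow (X \<union> Y). h (T \<inter> X) (T \<inter> Y)) = (\<Sum>p\<in>Pow X \<times> Pow Y. h (fst p) (snd p))"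
    by (rule sum.reindex_bij_witness[where i="\<lambda>p. fst p \<union> snd p" and j="\<lambda>T. (T \<inter> X, T \<inter> Y)"])
       (use assms in auto)
  also have "\<dots> = (\<Sum>T1\<in>Pow X. \<Sum>T2\<in>Pow Y. h T1 T2)"
    by (simp add: sum.cartesian_product split_beta)
  finally show ?thesis .
qed

lemma sum_Pow_delta:
  fixes \<phi> :: fvec
  assumes "finite Z"
  shows "(\<Sum>T\<in>Pow Z. (if S \<inter> Z = T then 1 else 0) * \<phi> ((S - Z) \<union> T)) = \<phi> S"
proof -
  have "(\<Sum>T\<in>Pow Z. (if S \<inter> Z = T then 1 else 0) * \<phi> ((S - Z) \<union> T))
      = (\<Sum>T\<in>Pow Z. if T = S \<inter> Z then \<phi> ((S - Z) \<union> (S \<inter> Z)) else 0)"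
    by (intro sum.cong) auto
  also have "\<dots> = \<phi> S" using assms by (simp add: sum.delta' Un_Diff_Int)
  finally show ?thesis .
qed

text \<open>\<open>word_kernel Z w S T\<close> is the matrix element of the monomial \<open>w\<close> between the basis
  configurations \<open>S\<close> and \<open>(S - Z) \<union> T\<close>.\<close>

fun word_kernel :: "int set \<Rightarrow> (bool \<times> int) list \<Rightarrow> int set \<Rightarrow> int set \<Rightarrow> complex" where
  "word_kernel Z [] S T = (if S \<inter> Z = T then 1 else 0)"
| "word_kernel Z ((b, x) # w) S T =
     (if b then (if x \<in> S then jw_sign S x * word_kernel Z w (S - {x}) T else 0)
      else (if x \<notin> S then jw_sign S x * word_kernel Z w (insert x S) T else 0))"

lemma op_word_kernel:
  assumes "finite Z" "word_in Z w"
  shows "op_word w \<phi> S = (\<Sum>T\<in>Pow Z. word_kernel Z w S T * \<phi> ((S - Z) \<union> T))"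
  using assms(2)
proof (induction w arbitrary: S)
  case Nil
  then show ?case using sum_Pow_delta[OF assms(1)] by simp
next
  case (Cons p w)
  obtain b x where p: "p = (b, x)" by (cases p)
  have "x \<in> Z" and wZ: "word_in Z w" using Cons.prems p by (auto simp: word_in_def)
  then have "(S - {x}) - Z = S - Z" "(insert x S) - Z = S - Z" by auto
  then show ?case
    using p Cons.IH[OF wZ, of "S - {x}"] Cons.IH[OF wZ, of "insert x S"]
    by (cases b) (auto simp: cre_def ann_def sum_distrib_left mult.assoc)
qed

lemma op_word_append: "op_word (u @ v) = op_word u \<circ> op_word v"
  by (induction u rule: op_word.induct) auto

lemma op_word_sum:
  assumes "finite Z" "word_in Z w"
  shows "op_word w (\<lambda>S. \<Sum>j\<in>J. c j * f j S) S = (\<Sum>j\<in>J. c j * op_word w (f j) S)"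
  unfolding op_word_kernel[OF assms]
  by (simp add: sum_distrib_left sum_distrib_right mult.assoc mult.left_commute sum.swap[of _ J])

definition left_sign :: "int \<Rightarrow> int set \<Rightarrow> complex" where
  "left_sign x1 S = (-1) ^ card {y \<in> S. y < x1}"

lemma left_sign_even_power: "even n \<Longrightarrow> left_sign x1 S ^ n = 1"
  unfolding left_sign_def by (auto simp: power_mult[symmetric] mult.commute elim!: evenE)

lemma left_sign_cong: "x1 \<le> x \<Longrightarrow> left_sign x1 (S - {x}) = left_sign x1 S \<and> left_sign x1 (insert x S) = left_sign x1 S"
proof -
  assume "x1 \<le> x"
  then have "{y \<in> S - {x}. y < x1} = {y \<in> S. y < x1}" "{y \<in> insert x S. y < x1} = {y \<in> S. y < x1}"
    by auto
  then show ?thesis by (simp add: left_sign_def)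
qed

lemma jw_sign_split:
  assumes "finite S" "x1 \<le> x" "x \<le> x2"
  shows "jw_sign S x = left_sign x1 S * jw_sign (S \<inter> {x1..x2}) x"
proof -
  have "{y \<in> S. y < x} = {y \<in> S. y < x1} \<union> {y \<in> S \<inter> {x1..x2}. y < x}"
    "{y \<in> S. y < x1} \<inter> {y \<in> S \<inter> {x1..x2}. y < x} = {}" using assms by auto
  then have "card {y \<in> S. y < x} = card {y \<in> S. y < x1} + card {y \<in> S \<inter> {x1..x2}. y < x}"
    using assms(1) by (simp add: card_Un_disjoint)
  then show ?thesis by (simp add: jw_sign_def left_sign_def power_add)
qed

text \<open>Inside an interval the Jordan-Wigner string of a monomial only sees the particles of the
  interval, up to one global sign per letter coming from the particles on its left.\<close>

lemma word_kernel_restrict: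
  fixes x1 x2 :: int
  defines "X \<equiv> {x1..x2}"
  assumes "word_in X w" "finite S"
  shows "word_kernel X w S T = left_sign x1 S ^ length w * word_kernel X w (S \<inter> X) T"
  using assms(2,3)
proof (induction w arbitrary: S)
  case (Cons p w)
  obtain b x where p: "p = (b, x)" by (cases p)
  have "x \<in> X" and wX: "word_in X w" using Cons.prems p by (auto simp: word_in_def)
  then have x12: "x1 \<le> x" "x \<le> x2" and XS: "(S - {x}) \<inter> X = S \<inter> X - {x}"
    "(insert x S) \<inter> X = insert x (S \<inter> X)" "x \<in> S \<inter> X \<longleftrightarrow> x \<in> S" by (auto simp: X_def)
  have "finite (S - {x})" "finite (insert x S)" using Cons.prems by auto
  note IH = Cons.IH[OF wX this(1)] Cons.IH[OF wX this(2)]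
  show ?case
    using p IH jw_sign_split[OF Cons.prems(2) x12] left_sign_cong[OF x12(1), of S] XS
    by (cases b) (auto simp: X_def)
qed simp

text \<open>An operator is \<^emph>\<open>local\<close> on \<open>X\<close> with kernel \<open>K\<close> if it acts only on the occupations in
  \<open>X\<close>, without any Jordan-Wigner string reaching outside \<open>X\<close>.\<close>

definition local_kernel :: "int set \<Rightarrow> fop \<Rightarrow> (int set \<Rightarrow> int set \<Rightarrow> complex) \<Rightarrow> bool" where
  "local_kernel X A K \<longleftrightarrow>
     (\<forall>\<phi> S. finite S \<longrightarrow> A \<phi> S = (\<Sum>T\<in>Pow X. K (S \<inter> X) T * \<phi> ((S - X) \<union> T)))"

lemma obs_even_local_kernel:
  assumes "A \<in> obs_even {x1..x2}"
  obtains K where "local_kernel {x1..x2} A K"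
proof -
  let ?X = "{x1..x2}"
  obtain n :: nat and coef ws where ws: "\<forall>i<n. word_in ?X (ws i) \<and> even (length (ws i))"
    and A: "A = (\<lambda>\<psi> S. \<Sum>i<n. coef i * op_word (ws i) \<psi> S)"
    using assms unfolding obs_even_def op_span_def by auto
  define K where "K U T = (\<Sum>i<n. coef i * word_kernel ?X (ws i) U T)" for U T
  have "A \<phi> S = (\<Sum>T\<in>Pow ?X. K (S \<inter> ?X) T * \<phi> ((S - ?X) \<union> T))" if "finite S" for \<phi> S
  proof -
    have "op_word (ws i) \<phi> S = (\<Sum>T\<in>Pow ?X. word_kernel ?X (ws i) (S \<inter> ?X) T * \<phi> ((S - ?X) \<union> T))"
      if "i < n" for i
    proof -
      have "word_in ?X (ws i)" "even (length (ws i))" using ws that by auto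
      then show ?thesis
        using op_word_kernel[of ?X "ws i" \<phi> S] word_kernel_restrict[of x1 x2 "ws i" S] \<open>finite S\<close>
        by (simp add: left_sign_even_power)
    qed
    then show ?thesis
      unfolding A K_def
      by (simp add: sum_distrib_left sum_distrib_right mult.assoc sum.swap[of _ "{..<n}"])
  qed
  then show ?thesis using that unfolding local_kernel_def by blast
qed

definition id_kernel :: "int set \<Rightarrow> int set \<Rightarrow> complex" where
  "id_kernel U T = (if U = T then 1 else 0)"

lemma local_kernel_id: "finite Y \<Longrightarrow> local_kernel Y id id_kernel"
  unfolding local_kernel_def id_kernel_def using sum_Pow_delta by simp

definition prod_kernel ::
  "int set \<Rightarrow> int set \<Rightarrow> (int set \<Rightarrow> int set \<Rightarrow> complex) \<Rightarrow> (int set \<Rightarrow> int set \<Rightarrow> complex) \<Rightarrow> int set \<Rightarrow> int set \<Rightarrow> complex" where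
  "prod_kernel X Y K1 K2 U T = K1 (U \<inter> X) (T \<inter> X) * K2 (U \<inter> Y) (T \<inter> Y)"

lemma local_kernel_comp:
  assumes "local_kernel X A K1" "local_kernel Y B K2" "X \<inter> Y = {}" "finite X" "finite Y"
  shows "local_kernel (X \<union> Y) (A \<circ> B) (prod_kernel X Y K1 K2)"
  unfolding local_kernel_def
proof (intro allI impI)
  fix \<phi> :: fvec and S :: "int set" assume fS: "finite S"
  have "(A \<circ> B) \<phi> S = (\<Sum>T1\<in>Pow X. K1 (S \<inter> X) T1 * B \<phi> ((S - X) \<union> T1))"
    using assms(1) fS by (simp add: local_kernel_def)
  also have "\<dots> = (\<Sum>T1\<in>Pow X. \<Sum>T2\<in>Pow Y. K1 (S \<inter> X) T1 * K2 (S \<inter> Y) T2 * \<phi> ((S - (X \<union> Y)) \<union> (T1 \<union> T2)))"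
  proof (rule sum.cong[OF refl])
    fix T1 assume T1: "T1 \<in> Pow X"
    have "finite ((S - X) \<union> T1)" using assms(4) fS T1 finite_subset by auto
    moreover have "((S - X) \<union> T1) \<inter> Y = S \<inter> Y" "\<And>T2. (((S - X) \<union> T1) - Y) \<union> T2 = (S - (X \<union> Y)) \<union> (T1 \<union> T2)"
      using T1 assms(3) by auto
    ultimately show "K1 (S \<inter> X) T1 * B \<phi> ((S - X) \<union> T1) = (\<Sum>T2\<in>Pow Y. K1 (S \<inter> X) T1 * K2 (S \<inter> Y) T2 * \<phi> ((S - (X \<union> Y)) \<union> (T1 \<union> T2)))"
      using assms(2) unfolding local_kernel_def by (simp add: sum_distrib_left mult.assoc)
  qed
  also have "\<dots> = (\<Sum>T\<in>Pow (X \<union> Y). K1 (S \<inter> X) (T \<inter> X) * K2 (S \<inter> Y) (T \<inter> Y) * \<phi> ((S - (X \<union> Y)) \<union> ((T \<inter> X) \<union> (T \<inter> Y))))"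
    by (rule sum_Pow_Un_disjoint[OF assms(3), symmetric])
  also have "\<dots> = (\<Sum>T\<in>Pow (X \<union> Y). prod_kernel X Y K1 K2 (S \<inter> (X \<union> Y)) T * \<phi> ((S - (X \<union> Y)) \<union> T))"
  proof (intro sum.cong refl)
    fix T assume "T \<in> Pow (X \<union> Y)"
    then have "(T \<inter> X) \<union> (T \<inter> Y) = T" by auto
    moreover have "S \<inter> (X \<union> Y) \<inter> X = S \<inter> X" "S \<inter> (X \<union> Y) \<inter> Y = S \<inter> Y" by auto
    ultimately show "K1 (S \<inter> X) (T \<inter> X) * K2 (S \<inter> Y) (T \<inter> Y) * \<phi> ((S - (X \<union> Y)) \<union> ((T \<inter> X) \<union> (T \<inter> Y)))
      = prod_kernel X Y K1 K2 (S \<inter> (X \<union> Y)) T * \<phi> ((S - (X \<union> Y)) \<union> T)"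
      by (simp add: prod_kernel_def)
  qed
  finally show "(A \<circ> B) \<phi> S = (\<Sum>T\<in>Pow (X \<union> Y). prod_kernel X Y K1 K2 (S \<inter> (X \<union> Y)) T * \<phi> ((S - (X \<union> Y)) \<union> T))" .
qed

lemma local_kernel_comp_commute:
  assumes "local_kernel X A1 K1" "local_kernel Y A2 K2" "X \<inter> Y = {}" "finite X" "finite Y" "finite S"
  shows "(A1 \<circ> A2) \<phi> S = (A2 \<circ> A1) \<phi> S"
proof -
  have "Y \<inter> X = {}" using assms(3) by auto
  with local_kernel_comp[OF assms(1-5)] local_kernel_comp[OF assms(2,1) _ assms(5,4)] assms(6)
  show ?thesis unfolding local_kernel_def prod_kernel_def by (simp add: Un_commute mult.commute)
qed

context
  fixes X \<Lambda> :: "int set" and A :: fop and K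
  assumes local: "local_kernel X A K" and sub: "X \<subseteq> \<Lambda>" and fin: "finite \<Lambda>"
begin

lemma local_kernel_apply_cong:
  assumes "\<And>S. S \<subseteq> \<Lambda> \<Longrightarrow> \<phi> S = \<phi>' S" "S \<subseteq> \<Lambda>"
  shows "A \<phi> S = A \<phi>' S"
proof -
  have "\<phi> ((S - X) \<union> T) = \<phi>' ((S - X) \<union> T)" if "T \<in> Pow X" for T
    using that sub assms(2) by (intro assms(1)) auto
  then show ?thesis
    using local fin finite_subset[OF assms(2)] unfolding local_kernel_def by (auto intro!: sum.cong)
qed

lemma local_kernel_apply_scale:
  assumes "S \<subseteq> \<Lambda>"
  shows "A (\<lambda>S. c * \<phi> S) S = c * A \<phi> S"
proof -
  have "finite S" using fin assms finite_subset by blast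
  then show ?thesis using local unfolding local_kernel_def by (simp add: sum_distrib_left mult.left_commute)
qed

lemma bdd_above_local_kernel: "bdd_above ((\<lambda>\<psi>. fnorm \<Lambda> (A \<psi>)) ` {\<psi>. fnorm \<Lambda> \<psi> \<le> 1})"
proof -
  define M where "M S = (\<Sum>T\<in>Pow X. cmod (K (S \<inter> X) T))" for S
  have bound: "cmod (A \<psi> S) \<le> M S" if "fnorm \<Lambda> \<psi> \<le> 1" "S \<subseteq> \<Lambda>" for \<psi> S
  proof -
    have "cmod (A \<psi> S) \<le> (\<Sum>T\<in>Pow X. cmod (K (S \<inter> X) T) * cmod (\<psi> ((S - X) \<union> T)))"
      using local fin finite_subset[OF that(2)] unfolding local_kernel_def
      by (simp add: norm_mult[symmetric] norm_sum)
    also have "\<dots> \<le> (\<Sum>T\<in>Pow X. cmod (K (S \<inter> X) T) * 1)"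
    proof (intro sum_mono mult_left_mono)
      fix T assume "T \<in> Pow X"
      then have "(S - X) \<union> T \<subseteq> \<Lambda>" using that(2) sub by auto
      then show "cmod (\<psi> ((S - X) \<union> T)) \<le> 1" using norm_le_fnorm[OF fin] that(1) order_trans by blast
    qed simp
    finally show ?thesis by (simp add: M_def)
  qed
  have "fnorm \<Lambda> (A \<psi>) \<le> sqrt (\<Sum>S\<in>Pow \<Lambda>. (M S)\<^sup>2)" if "fnorm \<Lambda> \<psi> \<le> 1" for \<psi>
  proof -
    have "(\<Sum>S\<in>Pow \<Lambda>. (cmod (A \<psi> S))\<^sup>2) \<le> (\<Sum>S\<in>Pow \<Lambda>. (M S)\<^sup>2)"
      using that bound by (intro sum_mono power_mono) auto
    then show ?thesis unfolding fnorm_def by simp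
  qed
  then show ?thesis by (intro bdd_aboveI[where M="sqrt (\<Sum>S\<in>Pow \<Lambda>. (M S)\<^sup>2)"]) auto
qed

lemma opnorm_local_nonneg: "0 \<le> opnorm \<Lambda> A"
proof -
  have "(\<lambda>S. 0) \<in> {\<psi>. fnorm \<Lambda> \<psi> \<le> 1}" by (simp add: fnorm_def)
  then have "fnorm \<Lambda> (A (\<lambda>S. 0)) \<le> opnorm \<Lambda> A"
    unfolding opnorm_def using bdd_above_local_kernel by (intro cSup_upper) auto
  then show ?thesis using fnorm_nonneg order_trans by blast
qed

lemma fnorm_local_le_opnorm: "fnorm \<Lambda> (A \<phi>) \<le> opnorm \<Lambda> A * fnorm \<Lambda> \<phi>"
proof (cases "fnorm \<Lambda> \<phi> = 0")
  case True
  have "A \<phi> S = 0" if "S \<subseteq> \<Lambda>" for S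
  proof -
    have "A \<phi> S = A (\<lambda>S. 0 * \<phi> S) S"
      using fnorm_eq_0D[OF fin True] by (intro local_kernel_apply_cong that) auto
    also have "\<dots> = 0 * A \<phi> S" by (rule local_kernel_apply_scale[OF that])
    finally show ?thesis by simp
  qed
  then have "fnorm \<Lambda> (A \<phi>) = fnorm \<Lambda> (\<lambda>S. 0)" by (intro fnorm_cong) auto
  then show ?thesis using True by (simp add: fnorm_def)
next
  case False
  then have pos: "fnorm \<Lambda> \<phi> > 0" using fnorm_nonneg[of \<Lambda> \<phi>] by simp
  define c where "c = complex_of_real (1 / fnorm \<Lambda> \<phi>)"
  have "fnorm \<Lambda> (\<lambda>S. c * \<phi> S) = 1" unfolding fnorm_scale c_def using pos by (simp add: norm_divide)
  then have "fnorm \<Lambda> (A (\<lambda>S. c * \<phi> S)) \<le> opnorm \<Lambda> A"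
    unfolding opnorm_def using bdd_above_local_kernel by (intro cSup_upper) auto
  moreover have "fnorm \<Lambda> (A (\<lambda>S. c * \<phi> S)) = fnorm \<Lambda> (\<lambda>S. c * A \<phi> S)"
    using local_kernel_apply_scale by (intro fnorm_cong) blast
  moreover have "fnorm \<Lambda> (\<lambda>S. c * A \<phi> S) = fnorm \<Lambda> (A \<phi>) / fnorm \<Lambda> \<phi>"
    unfolding fnorm_scale c_def using pos by (simp add: norm_divide)
  ultimately show ?thesis using pos by (simp add: divide_le_eq mult.commute)
qed

lemma norm_expectation_local_le: "cmod (finner \<Lambda> \<phi> (A \<phi>)) \<le> opnorm \<Lambda> A * (fnorm \<Lambda> \<phi>)\<^sup>2"
proof -
  have "cmod (finner \<Lambda> \<phi> (A \<phi>)) \<le> fnorm \<Lambda> \<phi> * (opnorm \<Lambda> A * fnorm \<Lambda> \<phi>)"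
    using norm_finner_le mult_left_mono[OF fnorm_local_le_opnorm fnorm_nonneg] order_trans by blast
  then show ?thesis by (simp add: power2_eq_square mult_ac)
qed

end

lemma finner_superposition_kernel:
  assumes fin: "finite \<Lambda>" "finite V" and Z: "Z \<subseteq> \<Lambda>" and cf: "\<forall>v\<in>V. cf v \<subseteq> \<Lambda>"
    and B: "\<forall>\<phi> S. S \<subseteq> \<Lambda> \<longrightarrow> B \<phi> S = (\<Sum>T\<in>Pow Z. c S T * \<phi> ((S - Z) \<union> T))"
    and \<psi>: "\<psi> = (\<lambda>S. \<Sum>v\<in>V. if S = cf v then w v else 0)"
  shows "finner \<Lambda> \<psi> (B \<psi>) = (\<Sum>v\<in>V. \<Sum>v'\<in>V. cnj (w v) * w v' *
            (if cf v - Z = cf v' - Z then c (cf v) (cf v' \<inter> Z) else 0))"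
proof -
  have fZ: "finite Z" using fin Z finite_subset by blast
  have inner: "(\<Sum>T\<in>Pow Z. if (cf v - Z) \<union> T = cf v' then c (cf v) T else 0)
      = (if cf v - Z = cf v' - Z then c (cf v) (cf v' \<inter> Z) else 0)" for v v'
  proof -
    have "\<And>T. T \<in> Pow Z \<Longrightarrow> ((cf v - Z) \<union> T = cf v') = (T = cf v' \<inter> Z \<and> cf v - Z = cf v' - Z)"
      by auto
    then have "(\<Sum>T\<in>Pow Z. if (cf v - Z) \<union> T = cf v' then c (cf v) T else 0)
        = (\<Sum>T\<in>Pow Z. if T = cf v' \<inter> Z then (if cf v - Z = cf v' - Z then c (cf v) (cf v' \<inter> Z) else 0) else 0)"
      by (intro sum.cong) auto
    then show ?thesis using fZ by (simp add: sum.delta')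
  qed
  have Bv: "B \<psi> (cf v) = (\<Sum>v'\<in>V. w v' * (if cf v - Z = cf v' - Z then c (cf v) (cf v' \<inter> Z) else 0))"
    if "v \<in> V" for v
  proof -
    have "B \<psi> (cf v) = (\<Sum>T\<in>Pow Z. c (cf v) T * (\<Sum>v'\<in>V. if (cf v - Z) \<union> T = cf v' then w v' else 0))"
      using B cf that \<psi> by simp
    also have "\<dots> = (\<Sum>v'\<in>V. w v' * (\<Sum>T\<in>Pow Z. if (cf v - Z) \<union> T = cf v' then c (cf v) T else 0))"
      by (simp add: sum_distrib_left sum.swap[of _ "Pow Z"] if_distrib mult.commute cong: if_cong)
    finally show ?thesis using inner by simp
  qed
  have "finner \<Lambda> \<psi> (B \<psi>) = (\<Sum>S\<in>Pow \<Lambda>. \<Sum>v\<in>V. (if S = cf v then cnj (w v) else 0) * B \<psi> S)"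
    unfolding finner_def \<psi> by (simp add: cnj_sum if_distrib sum_distrib_right cong: if_cong)
  also have "\<dots> = (\<Sum>v\<in>V. \<Sum>S\<in>Pow \<Lambda>. if S = cf v then cnj (w v) * B \<psi> S else 0)"
    by (subst sum.swap) (rule sum.cong[OF refl], rule sum.cong[OF refl], simp)
  also have "\<dots> = (\<Sum>v\<in>V. cnj (w v) * B \<psi> (cf v))"
    using fin cf by (intro sum.cong) (auto simp: sum.delta')
  also have "\<dots> = (\<Sum>v\<in>V. \<Sum>v'\<in>V. cnj (w v) * w v' *
            (if cf v - Z = cf v' - Z then c (cf v) (cf v' \<inter> Z) else 0))"
    using Bv by (simp add: sum_distrib_left mult.assoc)
  finally show ?thesis .
qed

section \<open>Parity\<close>

definition letters_in :: "int set \<Rightarrow> (bool \<times> int) list \<Rightarrow> nat" where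
  "letters_in X w = length (filter (\<lambda>p. snd p \<in> X) w)"

lemma letters_in_append: "letters_in X (u @ v) = letters_in X u + letters_in X v"
  by (simp add: letters_in_def)

lemma letters_in_word_in: "word_in X u \<Longrightarrow> letters_in X u = length u"
  by (simp add: letters_in_def word_in_def)

lemma letters_in_disjoint: "word_in Y v \<Longrightarrow> X \<inter> Y = {} \<Longrightarrow> letters_in X v = 0"
  unfolding letters_in_def word_in_def by (auto simp: filter_empty_conv)

text \<open>Each letter of \<open>w\<close> located in \<open>X\<close> changes the number of particles in \<open>X\<close> by one.\<close>

lemma word_kernel_parity:
  assumes "finite X" "X \<subseteq> Z" "finite S" "word_kernel Z w S T \<noteq> 0"
  shows "even (card (S \<inter> X) + card (T \<inter> X) + letters_in X w)"
  using assms(3,4)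
proof (induction w arbitrary: S)
  case Nil
  then have "T \<inter> X = S \<inter> X" using assms(2) by (auto split: if_splits)
  then show ?case by (simp add: letters_in_def)
next
  case (Cons p w)
  obtain b x where p: "p = (b, x)" by (cases p)
  define S' where "S' = (if b then S - {x} else insert x S)"
  have S': "finite S'" "word_kernel Z w S' T \<noteq> 0" "x \<in> S \<longleftrightarrow> b"
    using Cons.prems p unfolding S'_def by (auto split: if_splits)
  have "card (S \<inter> X) + (if x \<in> X \<and> \<not> b then 1 else 0) = card (S' \<inter> X) + (if x \<in> X \<and> b then 1 else 0)"
  proof (cases "x \<in> X")
    case True
    show ?thesis
    proof (cases b)
      case True
      then have "S \<inter> X = insert x (S' \<inter> X)" "x \<notin> S' \<inter> X" using S'(3) \<open>x \<in> X\<close> unfolding S'_def by auto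
      then show ?thesis using True \<open>x \<in> X\<close> assms(1) by simp
    next
      case False
      then have "S' \<inter> X = insert x (S \<inter> X)" "x \<notin> S \<inter> X" using S'(3) \<open>x \<in> X\<close> unfolding S'_def by auto
      then show ?thesis using False \<open>x \<in> X\<close> assms(1) by simp
    qed
  next
    case False
    then have "S' \<inter> X = S \<inter> X" unfolding S'_def by auto
    then show ?thesis using False by simp
  qed
  moreover have "letters_in X (p # w) = letters_in X w + (if x \<in> X then 1 else 0)"
    using p by (simp add: letters_in_def)
  ultimately show ?case using Cons.IH[OF S'(1,2)] by (auto split: if_splits; presburger)
qed

lemma finner_op_word_odd_eq_0:
  assumes fin: "finite \<Lambda>" and Z: "Z \<subseteq> \<Lambda>" and XZ: "X \<subseteq> Z"
    and w: "word_in Z w" "odd (letters_in X w)"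
    and fV: "finite V" and cf: "\<forall>v\<in>V. cf v \<subseteq> \<Lambda>"
    and \<psi>: "\<psi> = (\<lambda>S. \<Sum>v\<in>V. if S = cf v then wt v else 0)"
    and card_eq: "\<And>v v'. v \<in> V \<Longrightarrow> v' \<in> V \<Longrightarrow> cf v - Z = cf v' - Z \<Longrightarrow> card (cf v \<inter> X) = card (cf v' \<inter> X)"
  shows "finner \<Lambda> \<psi> (op_word w \<psi>) = 0"
proof -
  have fZ: "finite Z" using fin Z finite_subset by blast
  then have fX: "finite X" using XZ finite_subset by blast
  have zero: "word_kernel Z w (cf v) (cf v' \<inter> Z) = 0"
    if "v \<in> V" "v' \<in> V" "cf v - Z = cf v' - Z" for v v'
  proof (rule ccontr)
    assume "word_kernel Z w (cf v) (cf v' \<inter> Z) \<noteq> 0"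
    from word_kernel_parity[OF fX XZ _ this] have "even (card (cf v \<inter> X) + card (cf v' \<inter> Z \<inter> X) + letters_in X w)"
      using cf that(1) fin finite_subset by blast
    moreover have "cf v' \<inter> Z \<inter> X = cf v' \<inter> X" using XZ by auto
    ultimately show False using card_eq[OF that] w(2) by simp
  qed
  have "\<forall>\<phi> S. S \<subseteq> \<Lambda> \<longrightarrow> op_word w \<phi> S = (\<Sum>T\<in>Pow Z. word_kernel Z w S T * \<phi> ((S - Z) \<union> T))"
    using op_word_kernel[OF fZ w(1)] by blast
  then have "finner \<Lambda> \<psi> (op_word w \<psi>) = (\<Sum>v\<in>V. \<Sum>v'\<in>V. cnj (wt v) * wt v' *
      (if cf v - Z = cf v' - Z then word_kernel Z w (cf v) (cf v' \<inter> Z) else 0))"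
    by (rule finner_superposition_kernel[OF fin fV Z cf _ \<psi>])
  also have "\<dots> = 0" using zero by (intro sum.neutral ballI) auto
  finally show ?thesis .
qed

lemma finner_op_span_eq_0:
  assumes "A \<in> op_span P" "\<And>w. P w \<Longrightarrow> finner \<Lambda> \<psi> (op_word w \<psi>) = 0"
  shows "finner \<Lambda> \<psi> (A \<psi>) = 0"
proof -
  obtain n :: nat and c ws where "\<forall>i<n. P (ws i)" "A = (\<lambda>\<psi> S. \<Sum>i<n. c i * op_word (ws i) \<psi> S)"
    using assms(1) unfolding op_span_def by auto
  then show ?thesis using assms(2) by (simp add: finner_sum_right)
qed

lemma finner_op_span_comp_eq_0:
  assumes A1: "A1 \<in> op_span P1" and A2: "A2 \<in> op_span P2"
    and local1: "\<And>u. P1 u \<Longrightarrow> word_in Z u" "finite Z"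
    and zero: "\<And>u v. P1 u \<Longrightarrow> P2 v \<Longrightarrow> finner \<Lambda> \<psi> (op_word (u @ v) \<psi>) = 0"
  shows "finner \<Lambda> \<psi> ((A1 \<circ> A2) \<psi>) = 0"
proof -
  obtain n :: nat and c ws where ws: "\<forall>i<n. P1 (ws i)" and A1e: "A1 = (\<lambda>\<psi> S. \<Sum>i<n. c i * op_word (ws i) \<psi> S)"
    using A1 unfolding op_span_def by auto
  obtain n' :: nat and d vs where vs: "\<forall>j<n'. P2 (vs j)" and A2e: "A2 = (\<lambda>\<psi> S. \<Sum>j<n'. d j * op_word (vs j) \<psi> S)"
    using A2 unfolding op_span_def by auto
  have "op_word (ws i) (A2 \<psi>) S = (\<Sum>j<n'. d j * op_word (ws i @ vs j) \<psi> S)" if "i < n" for i S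
    unfolding A2e op_word_sum[OF local1(2) local1(1)[OF ws[rule_format, OF that]]] op_word_append by simp
  then have "(A1 \<circ> A2) \<psi> = (\<lambda>S. \<Sum>i<n. c i * (\<lambda>S. \<Sum>j<n'. d j * op_word (ws i @ vs j) \<psi> S) S)"
    unfolding A1e by (auto intro!: sum.cong)
  then show ?thesis using ws vs zero by (simp add: finner_sum_right)
qed

section \<open>VMD states as sums over role assignments\<close>

text \<open>A VMD tiling derived from a root tiling \<open>R\<close> is encoded by giving each tile of \<open>R\<close> a role:
  it is kept, or it is the first (\<open>Opens\<close>) or second (\<open>Closes\<close>) tile of a merged pair.\<close>

datatype role = Keep | Opens | Closes

lemma UNIV_role: "(UNIV :: role set) = {Keep, Opens, Closes}"
  using role.exhaust by auto

instance role :: finite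
  by standard (simp add: UNIV_role)

definition mergeable :: "tile \<Rightarrow> tile \<Rightarrow> bool" where
  "mergeable t1 t2 \<longleftrightarrow> t1 = Mono \<and> t2 \<in> {Mono, RMono1, RMono2}"

text \<open>\<open>roles_ok e R ss\<close>: the roles \<open>ss\<close> pair up the tiles of \<open>R\<close>, except that the last tile
  opens a pair closed outside \<open>R\<close> iff \<open>e\<close>.\<close>

fun roles_ok :: "bool \<Rightarrow> tile list \<Rightarrow> role list \<Rightarrow> bool" where
  "roles_ok e [] [] = (\<not> e)"
| "roles_ok e (t # ts) (Keep # ss) = roles_ok e ts ss"
| "roles_ok e [t] [Opens] = (e \<and> t = Mono)"
| "roles_ok e (t1 # t2 # ts) (Opens # Closes # ss) = (mergeable t1 t2 \<and> roles_ok e ts ss)"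
| "roles_ok _ _ _ = False"

text \<open>Roles of a segment whose first tile closes a pair opened outside iff \<open>eL\<close>.\<close>

definition seg_roles :: "bool \<Rightarrow> bool \<Rightarrow> tile list \<Rightarrow> role list \<Rightarrow> bool" where
  "seg_roles eL eR R ss =
     (if eL then (\<exists>t ts ss'. R = t # ts \<and> ss = Closes # ss' \<and> t \<in> {Mono, RMono1, RMono2} \<and> roles_ok eR ts ss')
      else roles_ok eR R ss)"

definition seg_role_set :: "bool \<Rightarrow> bool \<Rightarrow> tile list \<Rightarrow> role list set" where
  "seg_role_set eL eR R = {ss. seg_roles eL eR R ss}"

definition root_roles :: "tile list \<Rightarrow> role list set" where
  "root_roles R = {ss. roles_ok False R ss}"

fun merged :: "tile \<Rightarrow> tile" where
  "merged Mono = Dimer"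
| "merged RMono1 = TDimer1"
| "merged RMono2 = TDimer2"
| "merged _ = Void"

fun merge_pairs :: "tile list \<Rightarrow> role list \<Rightarrow> tile list" where
  "merge_pairs (t # ts) (Keep # ss) = t # merge_pairs ts ss"
| "merge_pairs (t1 # t2 # ts) (Opens # Closes # ss) = merged t2 # merge_pairs ts ss"
| "merge_pairs _ _ = []"

fun occ_sites :: "int \<Rightarrow> bool list \<Rightarrow> int set" where
  "occ_sites p [] = {}"
| "occ_sites p (x # w) = (if x then insert p (occ_sites (p + 1) w) else occ_sites (p + 1) w)"

text \<open>A dimer \<open>011000\<close> covers two monomer tiles, and both its particles lie in the first one.\<close>

fun role_sites :: "int \<Rightarrow> tile \<Rightarrow> role \<Rightarrow> int set" where
  "role_sites p t Keep = occ_sites p (tword t)"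
| "role_sites p t Opens = {p + 1, p + 2}"
| "role_sites p t Closes = {}"

text \<open>The occupied sites of the derived tiling encoded by the roles.\<close>

fun config :: "int \<Rightarrow> tile list \<Rightarrow> role list \<Rightarrow> int set" where
  "config p (t # ts) (s # ss) = role_sites p t s \<union> config (p + int (tlen t)) ts ss"
| "config p _ _ = {}"

definition role_weight :: "complex \<Rightarrow> tile \<Rightarrow> role \<Rightarrow> complex" where
  "role_weight lam t s = (if s = Opens then lam else if s = Keep then tile_weight lam t else 1)"

fun roles_weight :: "complex \<Rightarrow> tile list \<Rightarrow> role list \<Rightarrow> complex" where
  "roles_weight lam (t # ts) (s # ss) = role_weight lam t s * roles_weight lam ts ss"
| "roles_weight lam _ _ = 1"

definition tiles_len :: "tile list \<Rightarrow> int" where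
  "tiles_len R = int (sum_list (map tlen R))"

lemma tiles_len_append: "tiles_len (xs @ ys) = tiles_len xs + tiles_len ys"
  by (simp add: tiles_len_def)

lemma tiles_len_nonneg: "0 \<le> tiles_len R"
  by (simp add: tiles_len_def)

lemma tiles_len_Nil [simp]: "tiles_len [] = 0"
  by (simp add: tiles_len_def)

lemma tiles_len_Cons: "tiles_len (t # ts) = int (tlen t) + tiles_len ts"
  by (simp add: tiles_len_def)

lemma roles_ok_length: "roles_ok e R ss \<Longrightarrow> length ss = length R"
  by (induction e R ss rule: roles_ok.induct) auto

lemma roles_ok_Nil: "roles_ok e [] ss \<longleftrightarrow> ss = [] \<and> \<not> e"
  by (cases ss) auto

lemma roles_ok_single: "roles_ok e [t] ss \<longleftrightarrow> (ss = [Keep] \<and> \<not> e) \<or> (ss = [Opens] \<and> e \<and> t = Mono)"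
proof (cases ss)
  case (Cons s ss')
  then show ?thesis by (cases s; cases ss') (auto simp: roles_ok_Nil)
qed simp

lemma roles_ok_Cons2: "roles_ok e (t1 # t2 # ts) ss \<longleftrightarrow>
   (\<exists>ss'. ss = Keep # ss' \<and> roles_ok e (t2 # ts) ss') \<or>
   (\<exists>ss'. ss = Opens # Closes # ss' \<and> mergeable t1 t2 \<and> roles_ok e ts ss')"
proof (cases ss)
  case (Cons s ss')
  then show ?thesis
  proof (cases s)
    case Opens
    then show ?thesis using Cons by (cases ss'; case_tac "hd ss'") auto
  qed auto
qed simp

lemma seg_roles_length: "seg_roles eL eR R ss \<Longrightarrow> length ss = length R"
  by (auto simp: seg_roles_def split: if_splits dest: roles_ok_length)

lemma root_roles_eq: "root_roles R = seg_role_set False False R"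
  by (simp add: root_roles_def seg_role_set_def seg_roles_def)

lemma finite_seg_role_set: "finite (seg_role_set eL eR R)"
proof (rule finite_subset)
  show "seg_role_set eL eR R \<subseteq> {xs. set xs \<subseteq> UNIV \<and> length xs = length R}"
    using seg_roles_length by (auto simp: seg_role_set_def)
qed (use finite_lists_length_eq[of "UNIV :: role set"] in simp)

lemma finite_root_roles: "finite (root_roles R)"
  by (simp add: root_roles_eq finite_seg_role_set)

lemma derived_eq_merge_pairs: "derived R = merge_pairs R ` root_roles R"
proof (induction R rule: derived.induct)
  case 1
  then show ?case by (simp add: root_roles_def roles_ok_Nil)
next
  case (2 t)
  have "root_roles [t] = {[Keep]}" by (auto simp: root_roles_def roles_ok_single)
  then show ?case by simp
next
  case (3 t1 t2 ts)
  have V: "root_roles (t1 # t2 # ts) = Cons Keep ` root_roles (t2 # ts) \<union>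
      (if mergeable t1 t2 then (\<lambda>ss. Opens # Closes # ss) ` root_roles ts else {})"
    by (auto simp: root_roles_def roles_ok_Cons2)
  have "merge_pairs (t1 # t2 # ts) ` (Cons Keep ` root_roles (t2 # ts)) = Cons t1 ` derived (t2 # ts)"
    using 3(1) by (simp add: image_image)
  moreover have "mergeable t1 t2 \<Longrightarrow>
      merge_pairs (t1 # t2 # ts) ` ((\<lambda>ss. Opens # Closes # ss) ` root_roles ts) = Cons (merged t2) ` derived ts"
    using 3 by (auto simp: image_image mergeable_def)
  ultimately show ?case
    unfolding V image_Un by (cases t1; cases t2) (auto simp: mergeable_def)
qed

lemma inj_on_merge_pairs: "inj_on (merge_pairs R) (root_roles R)"
proof -
  have "roles_ok False R ss \<Longrightarrow> roles_ok False R ss' \<Longrightarrow> merge_pairs R ss = merge_pairs R ss' \<Longrightarrow> ss = ss'"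
    for ss ss'
  proof (induction R arbitrary: ss ss' rule: induct_list012)
    case (3 x y zs)
    from 3(3-5) show ?case
      unfolding roles_ok_Cons2 using 3(1,2) by (cases y) (auto simp: mergeable_def)
  qed (auto simp: roles_ok_Nil roles_ok_single)
  then show ?thesis unfolding inj_on_def root_roles_def by blast
qed

definition role_fits :: "tile \<Rightarrow> role \<Rightarrow> bool" where
  "role_fits t s \<longleftrightarrow> s = Keep \<or> (s = Opens \<and> t = Mono) \<or> (s = Closes \<and> t \<in> {Mono, RMono1, RMono2})"

lemma roles_ok_fits: "roles_ok e R ss \<Longrightarrow> list_all2 role_fits R ss"
  by (induction e R ss rule: roles_ok.induct) (auto simp: role_fits_def mergeable_def)

lemma seg_roles_fits: "seg_roles eL eR R ss \<Longrightarrow> list_all2 role_fits R ss"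
  by (auto simp: seg_roles_def role_fits_def split: if_splits dest: roles_ok_fits)

lemma occ_sites_range: "y \<in> occ_sites p w \<Longrightarrow> p \<le> y \<and> y < p + int (length w)"
  by (induction w arbitrary: p) (fastforce split: if_splits)+

lemma role_sites_range: "role_fits t s \<Longrightarrow> role_sites p t s \<subseteq> {p..<p + int (tlen t)}"
  using occ_sites_range[of _ p "tword t"] by (cases s) (auto simp: role_fits_def tlen_def)

lemma config_range: "list_all2 role_fits R ss \<Longrightarrow> config p R ss \<subseteq> {p..<p + tiles_len R}"
proof (induction R ss arbitrary: p rule: list_all2_induct)
  case (Cons t ts s ss)
  then show ?case using role_sites_range[OF Cons.hyps(1), of p] by (fastforce simp: tiles_len_def)
qed simp

lemma finite_occ_sites: "finite (occ_sites p w)"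
  by (induction w arbitrary: p) auto

lemma card_occ_sites: "card (occ_sites p w) = length (filter id w)"
proof (induction w arbitrary: p)
  case (Cons x w)
  have "p \<notin> occ_sites (p + 1) w" using occ_sites_range[of p "p + 1" w] by auto
  then show ?case using Cons.IH[of "p + 1"] finite_occ_sites by simp
qed simp

lemma finite_config: "finite (config p R ss)"
proof (induction p R ss rule: config.induct)
  case (1 p t ts s ss)
  then show ?case by (cases s) (auto simp: finite_occ_sites)
qed auto

lemma cre_word_basis:
  assumes "\<forall>y\<in>U. p + int (length w) \<le> y"
  shows "cre_word p w (\<lambda>S. if S = U then c else 0) = (\<lambda>S. if S = occ_sites p w \<union> U then c else 0)"
  using assms
proof (induction w arbitrary: p)
  case (Cons x w)
  have IH: "cre_word (p + 1) w (\<lambda>S. if S = U then c else 0) = (\<lambda>S. if S = occ_sites (p + 1) w \<union> U then c else 0)"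
    using Cons.prems by (intro Cons.IH) auto
  define V where "V = occ_sites (p + 1) w \<union> U"
  have Vgt: "\<forall>y\<in>V. p < y" using Cons.prems occ_sites_range[of _ "p + 1" w] unfolding V_def by force
  then have "{y \<in> insert p V. y < p} = {}" by auto
  then have "jw_sign (insert p V) p = 1" unfolding jw_sign_def by (simp only: card.empty power_0)
  then have "cre p (\<lambda>S. if S = V then c else 0) = (\<lambda>S. if S = insert p V then c else 0)"
    using Vgt unfolding cre_def by (force intro!: ext)
  then show ?case using IH unfolding V_def by simp
qed simp

lemma tiles_op_merge_pairs:
  "roles_ok False R ss \<Longrightarrow> tiles_op lam p (merge_pairs R ss) vac = (\<lambda>S. if S = config p R ss then roles_weight lam R ss else 0)"
proof (induction False R ss arbitrary: p rule: roles_ok.induct)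
  case (2 t ts ss)
  have "\<forall>y\<in>config (p + int (tlen t)) ts ss. p + int (length (tword t)) \<le> y"
    using config_range[OF roles_ok_fits, of False ts ss "p + int (tlen t)"] 2(2) by (auto simp: tlen_def)
  then show ?case using 2 by (auto simp: cre_word_basis role_weight_def intro!: ext)
next
  case (4 t1 t2 ts ss)
  have m: "t1 = Mono" "t2 \<in> {Mono, RMono1, RMono2}" using 4(2) by (auto simp: mergeable_def)
  have e: "p + int (tlen t1) + int (tlen t2) = p + int (tlen (merged t2))" using m by (auto simp: tlen_def)
  have "\<forall>y\<in>config (p + int (tlen (merged t2))) ts ss. p + int (length (tword (merged t2))) \<le> y"
    using config_range[OF roles_ok_fits, of False ts ss "p + int (tlen (merged t2))"] 4(2) by (auto simp: tlen_def)
  moreover have "occ_sites p (tword (merged t2)) = {p + 1, p + 2}" "tile_weight lam (merged t2) = lam"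
    using m by (auto simp: tile_weight_def)
  ultimately show ?case using 4 by (auto simp: cre_word_basis role_weight_def e intro!: ext)
qed (auto simp: vac_def)

lemma vmd_state_config_sum:
  "vmd_state lam a R = (\<lambda>S. \<Sum>ss\<in>root_roles R. if S = config a R ss then roles_weight lam R ss else 0)"
proof (rule ext)
  fix S
  have "vmd_state lam a R S = (\<Sum>ss\<in>root_roles R. tiles_op lam a (merge_pairs R ss) vac S)"
    unfolding vmd_state_def derived_eq_merge_pairs by (rule sum.reindex[OF inj_on_merge_pairs, unfolded comp_def])
  then show "vmd_state lam a R S = (\<Sum>ss\<in>root_roles R. if S = config a R ss then roles_weight lam R ss else 0)"
    by (simp add: tiles_op_merge_pairs root_roles_def)
qed

section \<open>Cutting role assignments into segments\<close>

lemma roles_ok_append: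
  assumes "length s1 = length xs" "ys \<noteq> []"
  shows "roles_ok e (xs @ ys) (s1 @ s2) \<longleftrightarrow> (\<exists>e'. roles_ok e' xs s1 \<and> seg_roles e' e ys s2)"
  using assms
proof (induction xs arbitrary: s1 rule: induct_list012)
  case 1
  then show ?case by (auto simp: seg_roles_def)
next
  case (2 x)
  then obtain s where s1: "s1 = [s]" by (cases s1) auto
  obtain y ys' where ys: "ys = y # ys'" using 2 by (cases ys) auto
  show ?case
    unfolding s1 ys by (cases s; cases s2) (auto simp: seg_roles_def roles_ok_single roles_ok_Cons2 mergeable_def)
next
  case (3 x y zs)
  then obtain s s' s1' where s1: "s1 = s # s' # s1'" and len: "length s1' = length zs"
    by (cases s1; cases "tl s1") auto
  have "roles_ok e (zs @ ys) (s1' @ s2) \<longleftrightarrow> (\<exists>e'. roles_ok e' zs s1' \<and> seg_roles e' e ys s2)"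
    using 3(1)[OF len 3(4)] .
  moreover have "roles_ok e ((y # zs) @ ys) ((s' # s1') @ s2) \<longleftrightarrow>
      (\<exists>e'. roles_ok e' (y # zs) (s' # s1') \<and> seg_roles e' e ys s2)"
    using 3(2)[of "s' # s1'"] len 3(4) by simp
  ultimately show ?case
    unfolding s1 append_Cons roles_ok_Cons2 by auto
qed

lemma seg_roles_append:
  assumes "length s1 = length xs" "xs \<noteq> []" "ys \<noteq> []"
  shows "seg_roles eL e (xs @ ys) (s1 @ s2) \<longleftrightarrow> (\<exists>e'. seg_roles eL e' xs s1 \<and> seg_roles e' e ys s2)"
proof (cases eL)
  case False
  then show ?thesis using roles_ok_append[OF assms(1,3)] by (simp add: seg_roles_def)
next
  case True
  obtain x xs' where xs: "xs = x # xs'" using assms by (cases xs) auto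
  obtain s s1' where s1: "s1 = s # s1'" and len: "length s1' = length xs'" using assms xs by (cases s1) auto
  show ?thesis
    using True xs s1 roles_ok_append[OF len assms(3)] by (auto simp: seg_roles_def)
qed

lemma seg_role_set_append:
  assumes "xs \<noteq> []" "ys \<noteq> []"
  shows "ss \<in> seg_role_set eL e (xs @ ys) \<longleftrightarrow>
    (\<exists>e' s1 s2. ss = s1 @ s2 \<and> s1 \<in> seg_role_set eL e' xs \<and> s2 \<in> seg_role_set e' e ys)"
proof
  assume ss: "ss \<in> seg_role_set eL e (xs @ ys)"
  then have "length ss = length xs + length ys" by (auto simp: seg_role_set_def dest: seg_roles_length)
  then have "ss = take (length xs) ss @ drop (length xs) ss" "length (take (length xs) ss) = length xs"
    by auto
  then show "\<exists>e' s1 s2. ss = s1 @ s2 \<and> s1 \<in> seg_role_set eL e' xs \<and> s2 \<in> seg_role_set e' e ys"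
    using ss seg_roles_append[OF _ assms] unfolding seg_role_set_def by (metis mem_Collect_eq)
qed (auto simp: seg_role_set_def seg_roles_append[OF seg_roles_length assms])

lemma roles_ok_hd: "roles_ok e R ss \<Longrightarrow> ss \<noteq> [] \<Longrightarrow> hd ss \<noteq> Closes"
  by (induction e R ss rule: roles_ok.induct) auto

lemma roles_ok_last: "roles_ok e R ss \<Longrightarrow> R \<noteq> [] \<Longrightarrow> last ss = Opens \<longleftrightarrow> e"
proof (induction e R ss rule: roles_ok.induct)
  case (2 e t ts ss)
  then show ?case by (cases ts) (auto simp: roles_ok_Nil)
next
  case (4 e t1 t2 ts ss)
  then show ?case by (cases ts) (auto simp: roles_ok_Nil)
qed auto

lemma seg_roles_flags:
  assumes "seg_roles eL eR R ss" "R \<noteq> []"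
  shows "(last ss = Opens \<longleftrightarrow> eR) \<and> (hd ss = Closes \<longleftrightarrow> eL)"
proof (cases eL)
  case False
  then have v: "roles_ok eR R ss" using assms by (simp add: seg_roles_def)
  then have "ss \<noteq> []" using roles_ok_length assms(2) by fastforce
  then show ?thesis using roles_ok_last[OF v assms(2)] roles_ok_hd[OF v] False by auto
next
  case True
  then obtain t ts ss' where "R = t # ts" "ss = Closes # ss'" "roles_ok eR ts ss'"
    using assms by (auto simp: seg_roles_def)
  moreover have "ts \<noteq> [] \<Longrightarrow> ss' \<noteq> []" using roles_ok_length calculation(3) by fastforce
  ultimately show ?thesis using roles_ok_last True by (cases "ts = []") (auto simp: roles_ok_Nil)
qed

lemma seg_roles_flags_unique:
  "seg_roles eL eR R ss \<Longrightarrow> seg_roles eL' eR' R ss \<Longrightarrow> R \<noteq> [] \<Longrightarrow> eL = eL' \<and> eR = eR'"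
  using seg_roles_flags by blast

lemma config_append:
  "length s1 = length xs \<Longrightarrow> config p (xs @ ys) (s1 @ s2) = config p xs s1 \<union> config (p + tiles_len xs) ys s2"
proof (induction xs arbitrary: s1 p)
  case (Cons x xs)
  then obtain s s1' where "s1 = s # s1'" "length s1' = length xs" by (cases s1) auto
  then show ?case using Cons.IH[of s1' "p + int (tlen x)"] by (auto simp: tiles_len_def add.assoc)
qed (simp add: tiles_len_def)

lemma roles_weight_append:
  "length s1 = length xs \<Longrightarrow> roles_weight lam (xs @ ys) (s1 @ s2) = roles_weight lam xs s1 * roles_weight lam ys s2"
proof (induction xs arbitrary: s1)
  case (Cons x xs)
  then obtain s s1' where "s1 = s # s1'" "length s1' = length xs" by (cases s1) auto
  then show ?case using Cons.IH[of s1'] by auto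
qed simp

lemma sum_seg_role_set_append:
  assumes "xs \<noteq> []" "ys \<noteq> []"
  shows "(\<Sum>ss\<in>seg_role_set eL e (xs @ ys). f ss)
       = (\<Sum>e'\<in>UNIV. \<Sum>s1\<in>seg_role_set eL e' xs. \<Sum>s2\<in>seg_role_set e' e ys. f (s1 @ s2))"
proof -
  define A where "A e' = (\<lambda>(a, b). a @ b) ` (seg_role_set eL e' xs \<times> seg_role_set e' e ys)" for e'
  have lens: "length a = length a'" if "a \<in> seg_role_set eL e1 xs" "a' \<in> seg_role_set eL e2 xs" for a a' e1 e2
    using that by (auto simp: seg_role_set_def dest!: seg_roles_length)
  have U: "seg_role_set eL e (xs @ ys) = (\<Union>e'. A e')"
  proof (intro set_eqI iffI)
    fix ss assume "ss \<in> seg_role_set eL e (xs @ ys)"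
    then obtain e' s1 s2 where "ss = s1 @ s2" "s1 \<in> seg_role_set eL e' xs" "s2 \<in> seg_role_set e' e ys"
      using seg_role_set_append[OF assms] by blast
    then show "ss \<in> (\<Union>e'. A e')" unfolding A_def by blast
  next
    fix ss assume "ss \<in> (\<Union>e'. A e')"
    then obtain e' s1 s2 where "ss = s1 @ s2" "s1 \<in> seg_role_set eL e' xs" "s2 \<in> seg_role_set e' e ys"
      unfolding A_def by force
    then show "ss \<in> seg_role_set eL e (xs @ ys)"
      using seg_role_set_append[OF assms] by blast
  qed
  have inj: "inj_on (\<lambda>(a, b). a @ b) (seg_role_set eL e' xs \<times> seg_role_set e' e ys)" for e'
  proof (rule inj_onI, clarify)
    fix a b a' b' assume "a \<in> seg_role_set eL e' xs" "a' \<in> seg_role_set eL e' xs" "a @ b = a' @ b'"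
    then show "a = a' \<and> b = b'" using lens by (metis append_eq_append_conv)
  qed
  have disj: "A e1 \<inter> A e2 = {}" if "e1 \<noteq> e2" for e1 e2
  proof (rule ccontr)
    assume "A e1 \<inter> A e2 \<noteq> {}"
    then obtain a b a' b' where ab: "a \<in> seg_role_set eL e1 xs" "a' \<in> seg_role_set eL e2 xs" "a @ b = a' @ b'"
      "b \<in> seg_role_set e1 e ys" "b' \<in> seg_role_set e2 e ys"
      unfolding A_def by auto
    then have "b = b'" using lens[OF ab(1,2)] by simp
    then show False using seg_roles_flags_unique[of e1 e ys b e2 e] ab(4,5) that assms(2)
      by (auto simp: seg_role_set_def)
  qed
  have "(\<Sum>ss\<in>seg_role_set eL e (xs @ ys). f ss) = (\<Sum>e'\<in>UNIV. \<Sum>ss\<in>A e'. f ss)"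
    unfolding U by (rule sum.UNION_disjoint) (use disj finite_seg_role_set in \<open>auto simp: A_def\<close>)
  also have "\<dots> = (\<Sum>e'\<in>UNIV. \<Sum>p\<in>seg_role_set eL e' xs \<times> seg_role_set e' e ys. f ((\<lambda>(a, b). a @ b) p))"
    unfolding A_def by (rule sum.cong[OF refl], rule sum.reindex[OF inj, unfolded comp_def])
  also have "\<dots> = (\<Sum>e'\<in>UNIV. \<Sum>s1\<in>seg_role_set eL e' xs. \<Sum>s2\<in>seg_role_set e' e ys. f (s1 @ s2))"
    by (simp add: sum.cartesian_product split_beta)
  finally show ?thesis .
qed

lemma sum_root_roles_split3:
  assumes "RL \<noteq> []" "B \<noteq> []" "RR \<noteq> []"
  shows "(\<Sum>ss\<in>root_roles (RL @ B @ RR). f ss) = (\<Sum>e1\<in>UNIV. \<Sum>e2\<in>UNIV. \<Sum>\<beta>\<in>seg_role_set e1 e2 B.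
            \<Sum>l\<in>seg_role_set False e1 RL. \<Sum>\<rho>\<in>seg_role_set e2 False RR. f (l @ \<beta> @ \<rho>))"
proof -
  have "(\<Sum>ss\<in>root_roles (RL @ B @ RR). f ss)
      = (\<Sum>e1\<in>UNIV. \<Sum>l\<in>seg_role_set False e1 RL. \<Sum>e2\<in>UNIV. \<Sum>\<beta>\<in>seg_role_set e1 e2 B.
            \<Sum>\<rho>\<in>seg_role_set e2 False RR. f (l @ \<beta> @ \<rho>))"
    using assms unfolding root_roles_eq by (simp add: sum_seg_role_set_append)
  also have "\<dots> = (\<Sum>e1\<in>UNIV. \<Sum>e2\<in>UNIV. \<Sum>l\<in>seg_role_set False e1 RL. \<Sum>\<beta>\<in>seg_role_set e1 e2 B.
            \<Sum>\<rho>\<in>seg_role_set e2 False RR. f (l @ \<beta> @ \<rho>))"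
    by (rule sum.cong[OF refl], rule sum.swap)
  also have "\<dots> = (\<Sum>e1\<in>UNIV. \<Sum>e2\<in>UNIV. \<Sum>\<beta>\<in>seg_role_set e1 e2 B. \<Sum>l\<in>seg_role_set False e1 RL.
            \<Sum>\<rho>\<in>seg_role_set e2 False RR. f (l @ \<beta> @ \<rho>))"
    by (rule sum.cong[OF refl], rule sum.cong[OF refl], rule sum.swap)
  finally show ?thesis .
qed

lemma root_roles_split3:
  assumes "RL \<noteq> []" "B \<noteq> []" "RR \<noteq> []" "ss \<in> root_roles (RL @ B @ RR)"
  obtains e1 e2 l \<beta> \<rho> where "ss = l @ \<beta> @ \<rho>" "l \<in> seg_role_set False e1 RL"
    "\<beta> \<in> seg_role_set e1 e2 B" "\<rho> \<in> seg_role_set e2 False RR"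
proof -
  obtain e1 l s where "ss = l @ s" "l \<in> seg_role_set False e1 RL" "s \<in> seg_role_set e1 False (B @ RR)"
    using assms seg_role_set_append[of RL "B @ RR"] unfolding root_roles_eq by auto
  moreover obtain e2 \<beta> \<rho> where "s = \<beta> @ \<rho>" "\<beta> \<in> seg_role_set e1 e2 B" "\<rho> \<in> seg_role_set e2 False RR"
    using calculation(3) assms(2,3) seg_role_set_append[of B RR] by auto
  ultimately show ?thesis using that by blast
qed

lemma config_split3:
  assumes "l \<in> seg_role_set False e1 RL" "\<beta> \<in> seg_role_set e1 e2 B"
  shows "config a (RL @ B @ RR) (l @ \<beta> @ \<rho>)
      = config a RL l \<union> config (a + tiles_len RL) B \<beta> \<union> config (a + tiles_len RL + tiles_len B) RR \<rho>"
    "roles_weight lam (RL @ B @ RR) (l @ \<beta> @ \<rho>) = roles_weight lam RL l * roles_weight lam B \<beta> * roles_weight lam RR \<rho>"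
proof -
  have "length l = length RL" "length \<beta> = length B"
    using assms by (auto simp: seg_role_set_def dest: seg_roles_length)
  then show "config a (RL @ B @ RR) (l @ \<beta> @ \<rho>)
      = config a RL l \<union> config (a + tiles_len RL) B \<beta> \<union> config (a + tiles_len RL + tiles_len B) RR \<rho>"
    "roles_weight lam (RL @ B @ RR) (l @ \<beta> @ \<rho>) = roles_weight lam RL l * roles_weight lam B \<beta> * roles_weight lam RR \<rho>"
    by (simp_all add: config_append roles_weight_append add.assoc Un_assoc mult.assoc)
qed

lemma config_seg_range: "\<beta> \<in> seg_role_set eL eR B \<Longrightarrow> config p B \<beta> \<subseteq> {p..<p + tiles_len B}"
  unfolding seg_role_set_def by (auto dest!: seg_roles_fits config_range)

lemma Un_eq_separated:
  assumes "A \<subseteq> I" "A' \<subseteq> I" "B \<inter> I = {}" "B' \<inter> I = {}"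
  shows "A \<union> B = A' \<union> B' \<longleftrightarrow> A = A' \<and> B = B'"
  using assms by blast

lemma Un3_eq_separated:
  fixes u v :: "'a::linorder"
  assumes "A \<subseteq> {..<u}" "A' \<subseteq> {..<u}" "B \<subseteq> {u..<v}" "B' \<subseteq> {u..<v}" "C \<subseteq> {v..}" "C' \<subseteq> {v..}" "u \<le> v"
  shows "A \<union> (B \<union> C) = A' \<union> (B' \<union> C') \<longleftrightarrow> A = A' \<and> B = B' \<and> C = C'"
proof -
  have "A \<union> (B \<union> C) = A' \<union> (B' \<union> C') \<longleftrightarrow> A = A' \<and> B \<union> C = B' \<union> C'"
    by (rule Un_eq_separated[where I="{..<u}"]) (use assms in fastforce)+
  moreover have "B \<union> C = B' \<union> C' \<longleftrightarrow> B = B' \<and> C = C'"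
    by (rule Un_eq_separated[where I="{..<v}"]) (use assms in fastforce)+
  ultimately show ?thesis by simp
qed

lemma config_inj_mono_void:
  "list_all2 role_fits B \<beta> \<Longrightarrow> list_all2 role_fits B \<beta>' \<Longrightarrow> set B \<subseteq> {Mono, Void} \<Longrightarrow>
   config p B \<beta> = config p B \<beta>' \<Longrightarrow> \<beta> = \<beta>'"
proof (induction B arbitrary: \<beta> \<beta>' p)
  case (Cons t B)
  obtain s \<beta>r where b: "\<beta> = s # \<beta>r" and ok: "role_fits t s" "list_all2 role_fits B \<beta>r"
    using Cons.prems(1) by (cases \<beta>) auto
  obtain s' \<beta>r' where b': "\<beta>' = s' # \<beta>r'" and ok': "role_fits t s'" "list_all2 role_fits B \<beta>r'"
    using Cons.prems(2) by (cases \<beta>') auto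
  let ?q = "p + int (tlen t)"
  have r: "role_sites p t s \<subseteq> {p..<?q}" "role_sites p t s' \<subseteq> {p..<?q}"
    "config ?q B \<beta>r \<inter> {p..<?q} = {}" "config ?q B \<beta>r' \<inter> {p..<?q} = {}"
    using role_sites_range ok(1) ok'(1) config_range[OF ok(2), of ?q] config_range[OF ok'(2), of ?q] by auto
  have C: "role_sites p t s \<union> config ?q B \<beta>r = role_sites p t s' \<union> config ?q B \<beta>r'"
    using Cons.prems(4) b b' by simp
  have "role_sites p t s = role_sites p t s'" and rest: "config ?q B \<beta>r = config ?q B \<beta>r'"
    using C Un_eq_separated[OF r(1,2), of "config ?q B \<beta>r" "config ?q B \<beta>r'"] r(3,4) by auto
  then have "s = s'" using Cons.prems(3) ok(1) ok'(1) by (cases s; cases s') (auto simp: role_fits_def)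
  then show ?case using Cons.IH[OF ok(2) ok'(2) _ rest] Cons.prems(3) b b' by simp
qed simp

section \<open>Factorization across a block\<close>

definition particles :: "tile list \<Rightarrow> nat" where
  "particles R = sum_list (map (\<lambda>t. length (filter id (tword t))) R)"

lemma card_config_roles_ok: "roles_ok e R ss \<Longrightarrow> card (config p R ss) = particles R + (if e then 1 else 0)"
proof (induction e R ss arbitrary: p rule: roles_ok.induct)
  case (2 e t ts ss)
  have v: "roles_ok e ts ss" using 2(2) by simp
  have "occ_sites p (tword t) \<inter> config (p + int (tlen t)) ts ss = {}"
    using occ_sites_range[of _ p "tword t"] config_range[OF roles_ok_fits[OF v], of "p + int (tlen t)"]
    by (force simp: tlen_def)
  then have "card (config p (t # ts) (Keep # ss)) = card (occ_sites p (tword t)) + card (config (p + int (tlen t)) ts ss)"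
    by (simp add: card_Un_disjoint finite_occ_sites finite_config)
  then show ?case using 2(1)[OF v] by (simp add: card_occ_sites particles_def)
next
  case (4 e t1 t2 ts ss)
  have v: "roles_ok e ts ss" and m: "t1 = Mono" "t2 \<in> {Mono, RMono1, RMono2}" using 4(2) by (auto simp: mergeable_def)
  let ?q = "p + int (tlen t1) + int (tlen t2)"
  have "{p + 1, p + 2} \<inter> config ?q ts ss = {}"
    using config_range[OF roles_ok_fits[OF v], of ?q] m by (force simp: tlen_def)
  then have "card (config p (t1 # t2 # ts) (Opens # Closes # ss)) = 2 + card (config ?q ts ss)"
    by (simp add: card_Un_disjoint finite_config)
  moreover have "particles (t1 # t2 # ts) = 2 + particles ts" using m by (auto simp: particles_def)
  ultimately show ?case using 4(1)[OF v] by simp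
qed (auto simp: particles_def)

lemma card_config_seg_roles:
  assumes "seg_roles eL eR R ss"
  shows "card (config p R ss) + (if eL then 1 else 0) = particles R + (if eR then 1 else 0)"
proof (cases eL)
  case False
  then show ?thesis using assms card_config_roles_ok by (simp add: seg_roles_def)
next
  case True
  then obtain t ts ss' where "R = t # ts" "ss = Closes # ss'" "t \<in> {Mono, RMono1, RMono2}" "roles_ok eR ts ss'"
    using assms by (auto simp: seg_roles_def)
  then show ?thesis using card_config_roles_ok True by (auto simp: particles_def)
qed

lemma card_config_root_roles: "ss \<in> root_roles R \<Longrightarrow> card (config p R ss) = particles R"
  using card_config_roles_ok[of False R ss p] by (simp add: root_roles_def)

lemma card_Int_eq_if_Diff_eq:
  assumes "finite A" "finite A'" "card A = card A'" "A - P = A' - P"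
  shows "card (A \<inter> P) = card (A' \<inter> P)"
  using assms card_Int_Diff[of A P] card_Int_Diff[of A' P] by simp

definition pair_term ::
  "complex \<Rightarrow> int \<Rightarrow> tile list \<Rightarrow> int set \<Rightarrow> (int set \<Rightarrow> int set \<Rightarrow> complex) \<Rightarrow> role list \<Rightarrow> role list \<Rightarrow> complex" where
  "pair_term lam p R P K l l' = cnj (roles_weight lam R l) * roles_weight lam R l' *
      (if config p R l - P = config p R l' - P then K (config p R l \<inter> P) (config p R l' \<inter> P) else 0)"

text \<open>The expectation of an observable with kernel \<open>K\<close> on \<open>P\<close> in the unnormalized state of the
  segment \<open>R\<close> with boundary flags \<open>eL\<close>, \<open>eR\<close>.\<close>

definition seg_expect ::
  "complex \<Rightarrow> int \<Rightarrow> tile list \<Rightarrow> int set \<Rightarrow> bool \<Rightarrow> bool \<Rightarrow> (int set \<Rightarrow> int set \<Rightarrow> complex) \<Rightarrow> complex" where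
  "seg_expect lam p R P eL eR K =
     (\<Sum>l\<in>seg_role_set eL eR R. \<Sum>l'\<in>seg_role_set eL eR R. pair_term lam p R P K l l')"

definition block_weight :: "complex \<Rightarrow> tile list \<Rightarrow> bool \<Rightarrow> bool \<Rightarrow> real" where
  "block_weight lam B e1 e2 = (\<Sum>\<beta>\<in>seg_role_set e1 e2 B. (cmod (roles_weight lam B \<beta>))\<^sup>2)"

lemma sum_flags_delta:
  fixes H :: "bool \<Rightarrow> bool \<Rightarrow> 'a \<Rightarrow> 'b::comm_monoid_add"
  assumes "\<beta> \<in> A e1 e2" "\<And>e1 e2. finite (A e1 e2)"
  shows "(\<Sum>e1'\<in>UNIV. \<Sum>e2'\<in>UNIV. \<Sum>\<beta>'\<in>A e1' e2'. if \<beta>' = \<beta> \<and> e1' = e1 \<and> e2' = e2 then H e1' e2' \<beta>' else 0)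
       = H e1 e2 \<beta>"
proof -
  have "(\<Sum>\<beta>'\<in>A e1' e2'. if \<beta>' = \<beta> \<and> e1' = e1 \<and> e2' = e2 then H e1' e2' \<beta>' else 0)
      = (if e1' = e1 \<and> e2' = e2 then H e1 e2 \<beta> else 0)" for e1' e2'
    using assms by (auto simp: sum.delta)
  then show ?thesis by (simp add: UNIV_bool)
qed

lemma sum4_factor:
  fixes f g :: "'a \<Rightarrow> 'a \<Rightarrow> 'b::comm_semiring_1"
  shows "(\<Sum>l\<in>A. \<Sum>r\<in>B. \<Sum>l'\<in>A. \<Sum>r'\<in>B. f l l' * c * g r r')
       = c * (\<Sum>l\<in>A. \<Sum>l'\<in>A. f l l') * (\<Sum>r\<in>B. \<Sum>r'\<in>B. g r r')"
proof -
  have "(\<Sum>l\<in>A. \<Sum>r\<in>B. \<Sum>l'\<in>A. \<Sum>r'\<in>B. f l l' * c * g r r')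
      = (\<Sum>l\<in>A. \<Sum>l'\<in>A. \<Sum>r\<in>B. \<Sum>r'\<in>B. f l l' * c * g r r')"
    by (rule sum.cong[OF refl], rule sum.swap)
  also have "\<dots> = (\<Sum>l\<in>A. \<Sum>l'\<in>A. (f l l' * c) * (\<Sum>r\<in>B. \<Sum>r'\<in>B. g r r'))"
    by (simp only: sum_distrib_left)
  finally show ?thesis by (simp only: sum_distrib_right sum_distrib_left mult_ac)
qed

context
  fixes RL B RR :: "tile list" and a :: int and P Q :: "int set"
  assumes B: "B \<noteq> []" "set B \<subseteq> {Mono, Void}"
    and PQ: "P \<subseteq> {..<a + tiles_len RL}" "Q \<subseteq> {a + tiles_len RL + tiles_len B..}"
begin

lemma block_config_parts:
  assumes "l \<in> seg_role_set False e1 RL" "\<beta> \<in> seg_role_set e1 e2 B" "\<rho> \<in> seg_role_set e2 False RR"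
  defines "br \<equiv> a + tiles_len RL + tiles_len B"
  shows "config a (RL @ B @ RR) (l @ \<beta> @ \<rho>) - (P \<union> Q)
      = (config a RL l - P) \<union> (config (a + tiles_len RL) B \<beta> \<union> (config br RR \<rho> - Q))"
    and "config a (RL @ B @ RR) (l @ \<beta> @ \<rho>) \<inter> P = config a RL l \<inter> P"
    and "config a (RL @ B @ RR) (l @ \<beta> @ \<rho>) \<inter> Q = config br RR \<rho> \<inter> Q"
proof -
  have r: "config a RL l \<subseteq> {..<a + tiles_len RL}" "config (a + tiles_len RL) B \<beta> \<subseteq> {a + tiles_len RL..<br}"
    "config br RR \<rho> \<subseteq> {br..}"
    using config_seg_range[OF assms(1), where p=a] config_seg_range[OF assms(2), where p="a + tiles_len RL"]
      config_seg_range[OF assms(3), where p=br] unfolding br_def by auto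
  have "config (a + tiles_len RL) B \<beta> \<inter> P = {}" "config br RR \<rho> \<inter> P = {}"
    "config a RL l \<inter> Q = {}" "config (a + tiles_len RL) B \<beta> \<inter> Q = {}"
    using r PQ tiles_len_nonneg[of B] unfolding br_def by (fastforce simp: subset_iff)+
  then show "config a (RL @ B @ RR) (l @ \<beta> @ \<rho>) - (P \<union> Q)
      = (config a RL l - P) \<union> (config (a + tiles_len RL) B \<beta> \<union> (config br RR \<rho> - Q))"
    and "config a (RL @ B @ RR) (l @ \<beta> @ \<rho>) \<inter> P = config a RL l \<inter> P"
    and "config a (RL @ B @ RR) (l @ \<beta> @ \<rho>) \<inter> Q = config br RR \<rho> \<inter> Q"
    unfolding config_split3(1)[OF assms(1,2), of a RR \<rho>, folded br_def] by blast+
qed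

text \<open>Two configurations agreeing outside \<open>P \<union> Q\<close> have the same roles on the block, hence the
  same boundary flags: the block decouples the two sides.\<close>

lemma block_config_diff_eq:
  assumes v: "l \<in> seg_role_set False e1 RL" "\<beta> \<in> seg_role_set e1 e2 B" "\<rho> \<in> seg_role_set e2 False RR"
    and v': "l' \<in> seg_role_set False e1' RL" "\<beta>' \<in> seg_role_set e1' e2' B" "\<rho>' \<in> seg_role_set e2' False RR"
  defines "br \<equiv> a + tiles_len RL + tiles_len B"
  shows "config a (RL @ B @ RR) (l @ \<beta> @ \<rho>) - (P \<union> Q) = config a (RL @ B @ RR) (l' @ \<beta>' @ \<rho>') - (P \<union> Q)
     \<longleftrightarrow> config a RL l - P = config a RL l' - P \<and> \<beta>' = \<beta> \<and> e1' = e1 \<and> e2' = e2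
         \<and> config br RR \<rho> - Q = config br RR \<rho>' - Q"
proof -
  let ?bs = "a + tiles_len RL"
  have "config a RL x - P \<subseteq> {..<?bs}" if "x \<in> seg_role_set False e RL" for x e
    using config_seg_range[OF that, where p=a] by auto
  moreover have "config ?bs B x \<subseteq> {?bs..<br}" if "x \<in> seg_role_set e e' B" for x e e'
    using config_seg_range[OF that, where p="?bs"] unfolding br_def by auto
  moreover have "config br RR x - Q \<subseteq> {br..}" if "x \<in> seg_role_set e False RR" for x e
    using config_seg_range[OF that, where p=br] by auto
  moreover have "?bs \<le> br" unfolding br_def using tiles_len_nonneg[of B] by simp
  ultimately have "config a (RL @ B @ RR) (l @ \<beta> @ \<rho>) - (P \<union> Q) = config a (RL @ B @ RR) (l' @ \<beta>' @ \<rho>') - (P \<union> Q)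
     \<longleftrightarrow> config a RL l - P = config a RL l' - P \<and> config ?bs B \<beta> = config ?bs B \<beta>'
         \<and> config br RR \<rho> - Q = config br RR \<rho>' - Q"
    unfolding block_config_parts[OF v] block_config_parts[OF v'] br_def[symmetric]
    using v v' by (intro Un3_eq_separated) auto
  moreover have "config ?bs B \<beta> = config ?bs B \<beta>' \<longleftrightarrow> \<beta>' = \<beta> \<and> e1' = e1 \<and> e2' = e2"
    using config_inj_mono_void[OF seg_roles_fits seg_roles_fits B(2)] seg_roles_flags_unique[OF _ _ B(1)] v(2) v'(2)
    unfolding seg_role_set_def by blast
  ultimately show ?thesis by blast
qed

lemma block_card_Int_eq:
  assumes ne: "RL \<noteq> []" "RR \<noteq> []" and ss: "ss \<in> root_roles (RL @ B @ RR)" "ss' \<in> root_roles (RL @ B @ RR)"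
    and eq: "config a (RL @ B @ RR) ss - (P \<union> Q) = config a (RL @ B @ RR) ss' - (P \<union> Q)"
  shows "card (config a (RL @ B @ RR) ss \<inter> P) = card (config a (RL @ B @ RR) ss' \<inter> P)
    \<and> card (config a (RL @ B @ RR) ss \<inter> Q) = card (config a (RL @ B @ RR) ss' \<inter> Q)"
proof -
  let ?br = "a + tiles_len RL + tiles_len B"
  obtain e1 e2 l \<beta> \<rho> where d: "ss = l @ \<beta> @ \<rho>" "l \<in> seg_role_set False e1 RL"
    "\<beta> \<in> seg_role_set e1 e2 B" "\<rho> \<in> seg_role_set e2 False RR"
    by (rule root_roles_split3[OF ne(1) B(1) ne(2) ss(1)])
  obtain e1' e2' l' \<beta>' \<rho>' where d': "ss' = l' @ \<beta>' @ \<rho>'" "l' \<in> seg_role_set False e1' RL"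
    "\<beta>' \<in> seg_role_set e1' e2' B" "\<rho>' \<in> seg_role_set e2' False RR"
    by (rule root_roles_split3[OF ne(1) B(1) ne(2) ss(2)])
  have E: "config a RL l - P = config a RL l' - P" "e1' = e1" "e2' = e2"
    "config ?br RR \<rho> - Q = config ?br RR \<rho>' - Q"
    using eq block_config_diff_eq[OF d(2-4) d'(2-4)] unfolding d d' by auto
  have "card (config a RL l) = card (config a RL l')" "card (config ?br RR \<rho>) = card (config ?br RR \<rho>')"
    using card_config_seg_roles[of False e1 RL l a] card_config_seg_roles[of False e1' RL l' a]
      card_config_seg_roles[of e2 False RR \<rho> ?br] card_config_seg_roles[of e2' False RR \<rho>' ?br]
      d(2,4) d'(2,4) E(2,3) by (auto simp: seg_role_set_def)
  then show ?thesis
    unfolding d d' block_config_parts[OF d(2-4)] block_config_parts[OF d'(2-4)]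
    using card_Int_eq_if_Diff_eq[OF finite_config finite_config] E(1,4) by blast
qed

lemma pair_term_block_split:
  assumes v: "l \<in> seg_role_set False e1 RL" "\<beta> \<in> seg_role_set e1 e2 B" "\<rho> \<in> seg_role_set e2 False RR"
    and v': "l' \<in> seg_role_set False e1' RL" "\<beta>' \<in> seg_role_set e1' e2' B" "\<rho>' \<in> seg_role_set e2' False RR"
  defines "br \<equiv> a + tiles_len RL + tiles_len B"
  shows "pair_term lam a (RL @ B @ RR) (P \<union> Q) (prod_kernel P Q K1 K2) (l @ \<beta> @ \<rho>) (l' @ \<beta>' @ \<rho>')
    = (if \<beta>' = \<beta> \<and> e1' = e1 \<and> e2' = e2
       then pair_term lam a RL P K1 l l' * (cnj (roles_weight lam B \<beta>) * roles_weight lam B \<beta>')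
         * pair_term lam br RR Q K2 \<rho> \<rho>' else 0)"
proof -
  have "config a (RL @ B @ RR) (l @ \<beta> @ \<rho>) \<inter> (P \<union> Q) \<inter> P = config a RL l \<inter> P"
    "config a (RL @ B @ RR) (l @ \<beta> @ \<rho>) \<inter> (P \<union> Q) \<inter> Q = config br RR \<rho> \<inter> Q"
    "config a (RL @ B @ RR) (l' @ \<beta>' @ \<rho>') \<inter> (P \<union> Q) \<inter> P = config a RL l' \<inter> P"
    "config a (RL @ B @ RR) (l' @ \<beta>' @ \<rho>') \<inter> (P \<union> Q) \<inter> Q = config br RR \<rho>' \<inter> Q"
    using block_config_parts(2,3)[OF v] block_config_parts(2,3)[OF v'] unfolding br_def by blast+
  then show ?thesis
    unfolding pair_term_def prod_kernel_def config_split3(2)[OF v(1,2)] config_split3(2)[OF v'(1,2)]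
      block_config_diff_eq[OF v v', folded br_def]
    by (auto simp: mult_ac)
qed

lemma seg_expect_block_factorization:
  assumes ne: "RL \<noteq> []" "RR \<noteq> []"
  defines "br \<equiv> a + tiles_len RL + tiles_len B"
  shows "seg_expect lam a (RL @ B @ RR) (P \<union> Q) False False (prod_kernel P Q K1 K2)
       = (\<Sum>e1\<in>UNIV. \<Sum>e2\<in>UNIV. of_real (block_weight lam B e1 e2)
            * seg_expect lam a RL P False e1 K1 * seg_expect lam br RR Q e2 False K2)"
proof -
  let ?F = "pair_term lam a (RL @ B @ RR) (P \<union> Q) (prod_kernel P Q K1 K2)"
  let ?VL = "\<lambda>e. seg_role_set False e RL" and ?VB = "\<lambda>e1 e2. seg_role_set e1 e2 B"
    and ?VR = "\<lambda>e. seg_role_set e False RR" and ?wB = "roles_weight lam B"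
  let ?GL = "pair_term lam a RL P K1" and ?GR = "pair_term lam br RR Q K2"
  have inner: "(\<Sum>ss'\<in>seg_role_set False False (RL @ B @ RR). ?F (l @ \<beta> @ \<rho>) ss')
      = (\<Sum>l'\<in>?VL e1. \<Sum>\<rho>'\<in>?VR e2. ?GL l l' * (cnj (?wB \<beta>) * ?wB \<beta>) * ?GR \<rho> \<rho>')"
    if v: "l \<in> ?VL e1" "\<beta> \<in> ?VB e1 e2" "\<rho> \<in> ?VR e2" for l \<beta> \<rho> e1 e2
  proof -
    have "(\<Sum>ss'\<in>seg_role_set False False (RL @ B @ RR). ?F (l @ \<beta> @ \<rho>) ss')
      = (\<Sum>e1'\<in>UNIV. \<Sum>e2'\<in>UNIV. \<Sum>\<beta>'\<in>?VB e1' e2'. if \<beta>' = \<beta> \<and> e1' = e1 \<and> e2' = e2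
        then (\<Sum>l'\<in>?VL e1'. \<Sum>\<rho>'\<in>?VR e2'. ?GL l l' * (cnj (?wB \<beta>) * ?wB \<beta>') * ?GR \<rho> \<rho>') else 0)"
      unfolding sum_root_roles_split3[OF ne(1) B(1) ne(2), unfolded root_roles_eq]
      by (intro sum.cong refl) (auto simp: pair_term_block_split[OF v] br_def)
    also have "\<dots> = (\<Sum>l'\<in>?VL e1. \<Sum>\<rho>'\<in>?VR e2. ?GL l l' * (cnj (?wB \<beta>) * ?wB \<beta>) * ?GR \<rho> \<rho>')"
      by (rule sum_flags_delta[where A="\<lambda>e1 e2. seg_role_set e1 e2 B", OF v(2) finite_seg_role_set])
    finally show ?thesis .
  qed
  have norm: "cnj (?wB \<beta>) * ?wB \<beta> = of_real ((cmod (?wB \<beta>))\<^sup>2)" for \<beta>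
    by (metis complex_norm_square mult.commute of_real_power)
  have "seg_expect lam a (RL @ B @ RR) (P \<union> Q) False False (prod_kernel P Q K1 K2)
      = (\<Sum>e1\<in>UNIV. \<Sum>e2\<in>UNIV. \<Sum>\<beta>\<in>?VB e1 e2. \<Sum>l\<in>?VL e1. \<Sum>\<rho>\<in>?VR e2.
          \<Sum>ss'\<in>seg_role_set False False (RL @ B @ RR). ?F (l @ \<beta> @ \<rho>) ss')"
    unfolding seg_expect_def by (rule sum_root_roles_split3[OF ne(1) B(1) ne(2), unfolded root_roles_eq])
  also have "\<dots> = (\<Sum>e1\<in>UNIV. \<Sum>e2\<in>UNIV. \<Sum>\<beta>\<in>?VB e1 e2. of_real ((cmod (?wB \<beta>))\<^sup>2)
      * (\<Sum>l\<in>?VL e1. \<Sum>l'\<in>?VL e1. ?GL l l') * (\<Sum>\<rho>\<in>?VR e2. \<Sum>\<rho>'\<in>?VR e2. ?GR \<rho> \<rho>'))"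
    by (intro sum.cong refl) (simp add: inner sum4_factor norm)
  also have "\<dots> = (\<Sum>e1\<in>UNIV. \<Sum>e2\<in>UNIV. of_real (block_weight lam B e1 e2)
      * seg_expect lam a RL P False e1 K1 * seg_expect lam br RR Q e2 False K2)"
    unfolding block_weight_def seg_expect_def of_real_sum by (simp add: sum_distrib_right)
  finally show ?thesis .
qed

end

section \<open>Correlations across a block\<close>

definition seg_state :: "complex \<Rightarrow> int \<Rightarrow> tile list \<Rightarrow> bool \<Rightarrow> bool \<Rightarrow> fvec" where
  "seg_state lam p R eL eR = (\<lambda>S. \<Sum>l\<in>seg_role_set eL eR R. if S = config p R l then roles_weight lam R l else 0)"

lemma seg_expect_eq_finner:
  assumes "local_kernel P A K" "P \<subseteq> \<Lambda>" "finite \<Lambda>" "\<forall>l\<in>seg_role_set eL eR R. config p R l \<subseteq> \<Lambda>"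
  shows "seg_expect lam p R P eL eR K = finner \<Lambda> (seg_state lam p R eL eR) (A (seg_state lam p R eL eR))"
proof -
  have "\<forall>\<phi> S. S \<subseteq> \<Lambda> \<longrightarrow> A \<phi> S = (\<Sum>T\<in>Pow P. K (S \<inter> P) T * \<phi> ((S - P) \<union> T))"
    using assms(1,3) finite_subset unfolding local_kernel_def by blast
  from finner_superposition_kernel[OF assms(3) finite_seg_role_set assms(2,4) this seg_state_def]
  show ?thesis unfolding seg_expect_def pair_term_def by simp
qed

lemma seg_expect_id_kernel:
  assumes "finite P" "P \<subseteq> \<Lambda>" "finite \<Lambda>" "\<forall>l\<in>seg_role_set eL eR R. config p R l \<subseteq> \<Lambda>"
  shows "seg_expect lam p R P eL eR id_kernel = of_real ((fnorm \<Lambda> (seg_state lam p R eL eR))\<^sup>2)"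
  using seg_expect_eq_finner[OF local_kernel_id[OF assms(1)] assms(2-4)] by (simp add: finner_self)

lemma norm_seg_expect_le:
  assumes "local_kernel P A K" "P \<subseteq> \<Lambda>" "finite \<Lambda>" "\<forall>l\<in>seg_role_set eL eR R. config p R l \<subseteq> \<Lambda>"
  shows "cmod (seg_expect lam p R P eL eR K) \<le> opnorm \<Lambda> A * (fnorm \<Lambda> (seg_state lam p R eL eR))\<^sup>2"
  unfolding seg_expect_eq_finner[OF assms] by (rule norm_expectation_local_le[OF assms(1-3)])

lemma finner_vmd_state_block:
  fixes RL B RR :: "tile list" and a :: int and P Q :: "int set"
  defines "R \<equiv> RL @ B @ RR" and "br \<equiv> a + tiles_len RL + tiles_len B" and "b \<equiv> a + tiles_len (RL @ B @ RR) - 1"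
  assumes ne: "RL \<noteq> []" "B \<noteq> []" "RR \<noteq> []" and BM: "set B \<subseteq> {Mono, Void}"
    and PQ: "P \<subseteq> {a..<a + tiles_len RL}" "Q \<subseteq> {br..b}"
    and k: "local_kernel P A1 K1" "local_kernel Q A2 K2"
  shows "finner {a..b} (vmd_state lam a R) ((A1 \<circ> A2) (vmd_state lam a R))
       = (\<Sum>e1\<in>UNIV. \<Sum>e2\<in>UNIV. of_real (block_weight lam B e1 e2)
            * seg_expect lam a RL P False e1 K1 * seg_expect lam br RR Q e2 False K2)"
proof -
  have fP: "finite P" "finite Q" using PQ finite_subset by auto
  have disj: "P \<inter> Q = {}" using PQ tiles_len_nonneg[of B] unfolding br_def by fastforce
  have "{a..<a + tiles_len RL} \<subseteq> {a..b}" "{br..b} \<subseteq> {a..b}"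
    using tiles_len_nonneg[of B] tiles_len_nonneg[of RR] tiles_len_nonneg[of RL]
    unfolding br_def b_def tiles_len_append by auto
  then have sub: "P \<union> Q \<subseteq> {a..b}" using PQ by blast
  have vmd: "vmd_state lam a R = seg_state lam a R False False"
    unfolding vmd_state_config_sum seg_state_def root_roles_eq ..
  have "\<forall>l\<in>seg_role_set False False R. config a R l \<subseteq> {a..b}"
    using config_seg_range[where p=a] unfolding b_def R_def by fastforce
  then have "finner {a..b} (vmd_state lam a R) ((A1 \<circ> A2) (vmd_state lam a R))
      = seg_expect lam a R (P \<union> Q) False False (prod_kernel P Q K1 K2)"
    unfolding vmd using seg_expect_eq_finner[OF local_kernel_comp[OF k disj fP] sub] by simp
  also have "\<dots> = (\<Sum>e1\<in>UNIV. \<Sum>e2\<in>UNIV. of_real (block_weight lam B e1 e2)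
            * seg_expect lam a RL P False e1 K1 * seg_expect lam br RR Q e2 False K2)"
    unfolding R_def br_def by (rule seg_expect_block_factorization[OF ne(2) BM _ _ ne(1,3)])
      (use PQ in \<open>auto simp: br_def\<close>)
  finally show ?thesis .
qed

lemma norm_cross_diff_le:
  fixes f :: "bool \<Rightarrow> complex"
  assumes "0 \<le> m0" "0 \<le> m1" "cmod (f False) \<le> \<gamma> * m0" "cmod (f True) \<le> \<gamma> * m1"
  shows "cmod (f True * of_real m0 - f False * of_real m1) \<le> 2 * \<gamma> * m0 * m1"
proof -
  have "cmod (f True * of_real m0 - f False * of_real m1) \<le> cmod (f True) * m0 + cmod (f False) * m1"
    using norm_triangle_ineq4[of "f True * of_real m0" "f False * of_real m1"] assms(1,2)
    by (simp add: norm_mult)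
  also have "\<dots> \<le> \<gamma> * m1 * m0 + \<gamma> * m0 * m1" using assms by (intro add_mono mult_right_mono) auto
  finally show ?thesis by simp
qed

lemma four_mult_le_square_sum:
  fixes s t z :: real
  assumes "0 \<le> s" "0 \<le> t" "s + t \<le> z"
  shows "4 * s * t \<le> z\<^sup>2"
proof -
  have "0 \<le> (s - t)\<^sup>2" by simp
  then have "4 * s * t \<le> (s + t)\<^sup>2" by (simp add: power2_eq_square algebra_simps)
  also have "\<dots> \<le> z\<^sup>2" using assms by (intro power_mono) auto
  finally show ?thesis .
qed

text \<open>Conditioning on the two boundary flags of the block, all four expectations are bilinear forms
  in the block weights \<open>p\<close>; the numerator of the covariance then factors as the determinant of
  \<open>p\<close> times two \<open>2 \<times> 2\<close> minors (fact \<open>id\<close>), each controlled by the operator norms.\<close>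

lemma covariance_bound:
  fixes p :: "bool \<Rightarrow> bool \<Rightarrow> real" and n v :: "bool \<Rightarrow> real" and x y :: "bool \<Rightarrow> complex"
    and \<alpha> \<beta> q :: real
  assumes nonneg: "\<And>e1 e2. 0 \<le> p e1 e2" "\<And>e. 0 \<le> n e" "\<And>e. 0 \<le> v e" "0 \<le> \<alpha>" "0 \<le> \<beta>" "0 \<le> q"
    and bounds: "\<And>e. cmod (x e) \<le> \<alpha> * n e" "\<And>e. cmod (y e) \<le> \<beta> * v e"
    and det: "0 \<le> p False False * p True True - p False True * p True False"
      "p False False * p True True - p False True * p True False \<le> q * (p False False * p True True)"
  defines "E \<equiv> \<lambda>f g. \<Sum>e1\<in>UNIV. \<Sum>e2\<in>UNIV. of_real (p e1 e2) * f e1 * g e2"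
  shows "cmod (E x y / E (of_real \<circ> n) (of_real \<circ> v) - E x (of_real \<circ> v) / E (of_real \<circ> n) (of_real \<circ> v)
           * (E (of_real \<circ> n) y / E (of_real \<circ> n) (of_real \<circ> v))) \<le> \<alpha> * \<beta> * q"
proof -
  define \<Delta> where "\<Delta> = p False False * p True True - p False True * p True False"
  define z where "z = p False False * n False * v False + p False True * n False * v True
    + p True False * n True * v False + p True True * n True * v True"
  have Z: "E (of_real \<circ> n) (of_real \<circ> v) = of_real z" unfolding E_def z_def by (simp add: UNIV_bool)
  have id: "of_real z * E x y - E x (of_real \<circ> v) * E (of_real \<circ> n) y
    = of_real \<Delta> * (x True * n False - x False * n True) * (y True * v False - y False * v True)"
    unfolding Z[symmetric] E_def \<Delta>_def by (simp add: UNIV_bool algebra_simps)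
  have amgm: "4 * (p False False * n False * v False) * (p True True * n True * v True) \<le> z\<^sup>2"
    using four_mult_le_square_sum[of "p False False * n False * v False" "p True True * n True * v True" z]
    unfolding z_def using nonneg by simp
  show ?thesis
  proof (cases "z = 0")
    case False
    then have zp: "z > 0" unfolding z_def using nonneg by (smt (verit) mult_nonneg_nonneg)
    let ?Z = "E (of_real \<circ> n) (of_real \<circ> v)"
    have "E x y / ?Z - E x (of_real \<circ> v) / ?Z * (E (of_real \<circ> n) y / ?Z)
        = (of_real z * E x y - E x (of_real \<circ> v) * E (of_real \<circ> n) y) / (of_real z)\<^sup>2"
      using zp by (simp add: Z field_simps power2_eq_square)
    then have "cmod (E x y / ?Z - E x (of_real \<circ> v) / ?Z * (E (of_real \<circ> n) y / ?Z))
        = cmod (of_real \<Delta> * (x True * n False - x False * n True) * (y True * v False - y False * v True) / (of_real z)\<^sup>2)"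
      unfolding id by simp
    also have "\<dots> = \<Delta> * cmod (x True * n False - x False * n True) * cmod (y True * v False - y False * v True) / z\<^sup>2"
      using det(1) unfolding \<Delta>_def[symmetric]
      by (simp add: norm_mult norm_divide norm_power del: of_real_diff of_real_mult)
    also have "\<dots> \<le> \<Delta> * (2 * \<alpha> * n False * n True) * (2 * \<beta> * v False * v True) / z\<^sup>2"
      using norm_cross_diff_le[of "n False" "n True" x \<alpha>] norm_cross_diff_le[of "v False" "v True" y \<beta>]
        nonneg bounds det(1)
      unfolding \<Delta>_def by (intro divide_right_mono mult_mono mult_left_mono) auto
    also have "\<dots> \<le> (\<alpha> * \<beta> * q) * (4 * (p False False * n False * v False) * (p True True * n True * v True)) / z\<^sup>2"
      using mult_left_mono[OF det(2)[folded \<Delta>_def], of "4 * \<alpha> * \<beta> * n False * n True * v False * v True"] nonneg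
      by (intro divide_right_mono) (simp_all add: algebra_simps)
    also have "\<dots> \<le> \<alpha> * \<beta> * q"
      using mult_left_mono[OF amgm, of "\<alpha> * \<beta> * q"] nonneg zp by (simp add: divide_le_eq)
    finally show ?thesis .
  qed (use nonneg in \<open>simp add: Z\<close>)
qed

lemma omega_covariance_block_le:
  fixes RL B RR :: "tile list" and a :: int and P Q :: "int set" and q :: real and lam :: complex
  defines "R \<equiv> RL @ B @ RR" and "br \<equiv> a + tiles_len RL + tiles_len B" and "b \<equiv> a + tiles_len (RL @ B @ RR) - 1"
    and "w \<equiv> block_weight lam B"
  assumes ne: "RL \<noteq> []" "B \<noteq> []" "RR \<noteq> []" and BM: "set B \<subseteq> {Mono, Void}"
    and PQ: "P \<subseteq> {a..<a + tiles_len RL}" "Q \<subseteq> {br..b}"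
    and k: "local_kernel P A1 K1" "local_kernel Q A2 K2"
    and det: "0 \<le> w False False * w True True - w False True * w True False"
      "w False False * w True True - w False True * w True False \<le> q * (w False False * w True True)"
      "0 \<le> q"
  shows "cmod (omega lam a b R (A1 \<circ> A2) - omega lam a b R A1 * omega lam a b R A2)
           \<le> opnorm {a..b} A1 * opnorm {a..b} A2 * q"
proof -
  let ?\<Lambda> = "{a..b}" and ?\<psi> = "vmd_state lam a R"
  let ?L = "seg_state lam a RL False" and ?R = "seg_state lam br RR"
  have fin: "finite ?\<Lambda>" by simp
  have fP: "finite P" "finite Q" using PQ finite_subset by auto
  have "{a..<a + tiles_len RL} \<subseteq> ?\<Lambda>" "{br..b} \<subseteq> ?\<Lambda>"
    using tiles_len_nonneg[of B] tiles_len_nonneg[of RR] tiles_len_nonneg[of RL]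
    unfolding br_def b_def tiles_len_append by auto
  then have PL: "P \<subseteq> ?\<Lambda>" "Q \<subseteq> ?\<Lambda>" using PQ by blast+
  have rL: "\<forall>l\<in>seg_role_set False e RL. config a RL l \<subseteq> ?\<Lambda>" for e
    using config_seg_range[where p=a] tiles_len_nonneg[of B] tiles_len_nonneg[of RR]
    unfolding b_def tiles_len_append by fastforce
  have rR: "\<forall>\<rho>\<in>seg_role_set e False RR. config br RR \<rho> \<subseteq> ?\<Lambda>" for e
    using config_seg_range[where p=br] tiles_len_nonneg[of B] tiles_len_nonneg[of RL]
    unfolding b_def br_def tiles_len_append by fastforce
  define n where "n e = (fnorm ?\<Lambda> (?L e))\<^sup>2" for e
  define v where "v e = (fnorm ?\<Lambda> (?R e False))\<^sup>2" for e
  define x where "x e = seg_expect lam a RL P False e K1" for e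
  define y where "y e = seg_expect lam br RR Q e False K2" for e
  define E where "E f g = (\<Sum>e1\<in>UNIV. \<Sum>e2\<in>UNIV. of_real (w e1 e2) * f e1 * g e2)" for f g :: "bool \<Rightarrow> complex"
  note idP = local_kernel_id[OF fP(1)] and idQ = local_kernel_id[OF fP(2)]
  note fd = finner_vmd_state_block[OF ne BM PQ[unfolded br_def b_def], folded R_def br_def b_def]
  have nv: "seg_expect lam a RL P False e id_kernel = of_real (n e)"
    "seg_expect lam br RR Q e False id_kernel = of_real (v e)" for e
    unfolding n_def v_def by (intro seg_expect_id_kernel fP PL fin rL rR)+
  have "finner ?\<Lambda> ?\<psi> ?\<psi> = E (of_real \<circ> n) (of_real \<circ> v)"
    using fd[OF idP idQ] by (simp add: nv E_def w_def)
  moreover have "finner ?\<Lambda> ?\<psi> ((A1 \<circ> A2) ?\<psi>) = E x y"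
    using fd[OF k] by (simp add: x_def y_def E_def w_def)
  moreover have "finner ?\<Lambda> ?\<psi> (A1 ?\<psi>) = E x (of_real \<circ> v)"
    using fd[OF k(1) idQ] by (simp add: nv x_def E_def w_def)
  moreover have "finner ?\<Lambda> ?\<psi> (A2 ?\<psi>) = E (of_real \<circ> n) y"
    using fd[OF idP k(2)] by (simp add: nv y_def E_def w_def)
  moreover have "cmod (x e) \<le> opnorm ?\<Lambda> A1 * n e" "cmod (y e) \<le> opnorm ?\<Lambda> A2 * v e" for e
    unfolding x_def y_def n_def v_def by (intro norm_seg_expect_le k PL fin rL rR)+
  moreover have "0 \<le> w e1 e2" "0 \<le> n e" "0 \<le> v e" for e e1 e2
    unfolding w_def block_weight_def n_def v_def by (auto intro: sum_nonneg)
  ultimately show ?thesis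
    unfolding omega_def E_def using covariance_bound[OF _ _ _ opnorm_local_nonneg[OF k(1) PL(1) fin]
      opnorm_local_nonneg[OF k(2) PL(2) fin] det(3) _ _ det(1,2)] by simp
qed

section \<open>Boundary weights of void and monomer blocks\<close>

lemma block_weight_Void:
  "block_weight lam [Void] False False = 1" "block_weight lam [Void] False True = 0"
  "block_weight lam [Void] True e = 0"
proof -
  have "seg_role_set False False [Void] = {[Keep]}" "seg_role_set False True [Void] = {}"
    "seg_role_set True e [Void] = {}"
    by (auto simp: seg_role_set_def seg_roles_def roles_ok_single)
  then show "block_weight lam [Void] False False = 1" "block_weight lam [Void] False True = 0"
    "block_weight lam [Void] True e = 0"
    by (simp_all add: block_weight_def role_weight_def tile_weight_def)
qed

lemma block_weight_Mono:
  "block_weight lam [Mono] False False = 1" "block_weight lam [Mono] False True = (cmod lam)\<^sup>2"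
  "block_weight lam [Mono] True False = 1" "block_weight lam [Mono] True True = 0"
proof -
  have "seg_role_set False False [Mono] = {[Keep]}" "seg_role_set False True [Mono] = {[Opens]}"
    "seg_role_set True False [Mono] = {[Closes]}" "seg_role_set True True [Mono] = {}"
    by (auto simp: seg_role_set_def seg_roles_def roles_ok_single roles_ok_Nil)
  then show "block_weight lam [Mono] False False = 1" "block_weight lam [Mono] False True = (cmod lam)\<^sup>2"
    "block_weight lam [Mono] True False = 1" "block_weight lam [Mono] True True = 0"
    by (simp_all add: block_weight_def role_weight_def tile_weight_def)
qed

lemma block_weight_append:
  assumes "xs \<noteq> []" "ys \<noteq> []"
  shows "block_weight lam (xs @ ys) e1 e2 = (\<Sum>e\<in>UNIV. block_weight lam xs e1 e * block_weight lam ys e e2)"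
proof -
  have "block_weight lam (xs @ ys) e1 e2 = (\<Sum>e\<in>UNIV. \<Sum>s1\<in>seg_role_set e1 e xs. \<Sum>s2\<in>seg_role_set e e2 ys.
      (cmod (roles_weight lam xs s1))\<^sup>2 * (cmod (roles_weight lam ys s2))\<^sup>2)"
    unfolding block_weight_def sum_seg_role_set_append[OF assms]
    by (intro sum.cong refl) (auto simp: seg_role_set_def roles_weight_append seg_roles_length norm_mult power_mult_distrib)
  then show ?thesis unfolding block_weight_def by (simp add: sum_product)
qed

text \<open>Fibonacci polynomials: \<open>fib_poly t\<close> gives the entries of the powers of the transfer matrix
  \<open>[[1, t], [1, 0]]\<close> of a monomer.\<close>

fun fib_poly :: "real \<Rightarrow> nat \<Rightarrow> real" where
  "fib_poly t 0 = 0"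
| "fib_poly t (Suc 0) = 1"
| "fib_poly t (Suc (Suc n)) = fib_poly t (Suc n) + t * fib_poly t n"

lemma block_weight_monos:
  fixes lam :: complex
  defines "t \<equiv> (cmod lam)\<^sup>2"
  shows "block_weight lam (replicate (Suc k) Mono) False False = fib_poly t (Suc (Suc k))
    \<and> block_weight lam (replicate (Suc k) Mono) False True = t * fib_poly t (Suc k)
    \<and> block_weight lam (replicate (Suc k) Mono) True False = fib_poly t (Suc k)
    \<and> block_weight lam (replicate (Suc k) Mono) True True = t * fib_poly t k"
proof (induction k)
  case 0
  then show ?case by (simp add: block_weight_Mono t_def)
next
  case (Suc k)
  have eq: "replicate (Suc (Suc k)) Mono = replicate (Suc k) Mono @ [Mono]"
    by (simp add: replicate_append_same)
  have "block_weight lam (replicate (Suc (Suc k)) Mono) e1 e2 =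
      block_weight lam (replicate (Suc k) Mono) e1 False * block_weight lam [Mono] False e2 +
      block_weight lam (replicate (Suc k) Mono) e1 True * block_weight lam [Mono] True e2" for e1 e2
    by (subst eq, subst block_weight_append) (simp_all only: UNIV_bool, simp_all)
  then show ?case using Suc.IH by (simp add: block_weight_Mono t_def[symmetric] algebra_simps)
qed

lemma fib_poly_cassini: "fib_poly t (Suc (Suc n)) * fib_poly t n - (fib_poly t (Suc n))\<^sup>2 = - ((- t) ^ n)"
proof (induction n)
  case (Suc n)
  have "fib_poly t (Suc (Suc (Suc n))) * fib_poly t (Suc n) - (fib_poly t (Suc (Suc n)))\<^sup>2
      = - t * (fib_poly t (Suc (Suc n)) * fib_poly t n - (fib_poly t (Suc n))\<^sup>2)"
    by (simp add: power2_eq_square algebra_simps)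
  then show ?case using Suc.IH by simp
qed (simp add: power2_eq_square)

text \<open>Binet's formula, with \<open>\<mu>\<close> and \<open>-\<nu>\<close> the roots of \<open>x\<^sup>2 = x + t\<close>.\<close>

lemma fib_poly_binet:
  fixes t :: real
  assumes "0 \<le> t"
  defines "s \<equiv> sqrt (1 + 4 * t)"
  defines "\<mu> \<equiv> (1 + s) / 2" and "\<nu> \<equiv> (s - 1) / 2"
  shows "s * fib_poly t n = \<mu> ^ n - (- \<nu>) ^ n"
proof -
  have s2: "s\<^sup>2 = 1 + 4 * t" unfolding s_def using assms by simp
  have roots: "\<mu>\<^sup>2 = \<mu> + t" "(- \<nu>)\<^sup>2 = - \<nu> + t"
    using s2 unfolding \<mu>_def \<nu>_def power2_eq_square by (simp_all add: field_simps)
  have step: "x ^ Suc (Suc n) = x ^ Suc n + t * x ^ n" if "x\<^sup>2 = x + t" for x :: real and n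
  proof -
    have "x ^ Suc (Suc n) = x ^ n * x\<^sup>2" by (simp add: power2_eq_square mult_ac)
    then show ?thesis using that by (simp add: algebra_simps)
  qed
  show ?thesis
  proof (induction n rule: induct_nat_012)
    case (ge2 n)
    have "s * fib_poly t (Suc (Suc n)) = s * fib_poly t (Suc n) + t * (s * fib_poly t n)"
      by (simp add: algebra_simps)
    also have "\<dots> = (\<mu> ^ Suc n + t * \<mu> ^ n) - ((- \<nu>) ^ Suc n + t * (- \<nu>) ^ n)"
      unfolding ge2.IH by (simp add: algebra_simps)
    also have "\<dots> = \<mu> ^ Suc (Suc n) - (- \<nu>) ^ Suc (Suc n)"
      by (simp only: step[OF roots(1)] step[OF roots(2)])
    finally show ?case .
  qed (simp_all add: \<mu>_def \<nu>_def field_simps)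
qed

lemma fib_poly_odd_lower:
  fixes t :: real
  assumes "0 \<le> t" "odd n"
  shows "((1 + sqrt (1 + 4 * t)) / 2) ^ n \<le> sqrt (1 + 4 * t) * fib_poly t n"
proof -
  have "0 \<le> (sqrt (1 + 4 * t) - 1) / 2" using assms(1) by simp
  then show ?thesis using fib_poly_binet[OF assms(1), of n] assms(2) by simp
qed

lemma monos_block_weight_det_eq:
  fixes lam :: complex
  assumes "odd k"
  defines "w \<equiv> block_weight lam (replicate (Suc k) Mono)"
  shows "w False False * w True True - w False True * w True False = ((cmod lam)\<^sup>2) ^ Suc k"
proof -
  define t where "t = (cmod lam)\<^sup>2"
  have "w False False * w True True - w False True * w True False
      = t * (fib_poly t (Suc (Suc k)) * fib_poly t k - (fib_poly t (Suc k))\<^sup>2)"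
    using block_weight_monos[of lam k, folded t_def w_def] by (simp add: power2_eq_square algebra_simps)
  also have "\<dots> = t ^ Suc k"
    using assms(1) by (simp del: fib_poly.simps add: fib_poly_cassini)
  finally show ?thesis unfolding t_def .
qed

lemma monos_block_weight_det:
  fixes lam :: complex and k :: nat
  assumes "lam \<noteq> 0" "odd k"
  defines "r \<equiv> (sqrt (1 + 4 * (cmod lam)\<^sup>2) - 1) / (sqrt (1 + 4 * (cmod lam)\<^sup>2) + 1)"
    and "w \<equiv> block_weight lam (replicate (Suc k) Mono)"
  shows "0 \<le> w False False * w True True - w False True * w True False"
    and "w False False * w True True - w False True * w True False \<le> 4 * r ^ k * (w False False * w True True)"
proof -
  define t where "t = (cmod lam)\<^sup>2"
  define s where "s = sqrt (1 + 4 * t)"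
  define \<mu> where "\<mu> = (1 + s) / 2"
  define \<nu> where "\<nu> = (s - 1) / 2"
  have t: "t > 0" unfolding t_def using assms(1) by simp
  have s1: "s > 1" unfolding s_def using t by simp
  have "r = (s - 1) / (s + 1)" unfolding r_def s_def t_def ..
  moreover have "s\<^sup>2 = 1 + 4 * t" unfolding s_def using t by simp
  ultimately have mn: "\<mu> > 0" "\<nu> > 0" "\<mu> * \<nu> = t" "s \<le> 2 * \<mu>" "r = \<nu> / \<mu>"
    using s1 unfolding \<mu>_def \<nu>_def by (auto simp: power2_eq_square field_simps)
  note det = monos_block_weight_det_eq[OF assms(2), of lam, folded t_def w_def]
  then show "0 \<le> w False False * w True True - w False True * w True False" using t by simp
  have l: "\<mu> ^ Suc (Suc k) \<le> s * fib_poly t (Suc (Suc k))" "\<mu> ^ k \<le> s * fib_poly t k"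
    unfolding \<mu>_def s_def by (rule fib_poly_odd_lower[OF less_imp_le[OF t]], simp add: assms(2))+
  have "s\<^sup>2 * t ^ Suc k = t * ((\<mu> * \<nu>) ^ k * s\<^sup>2)" using mn(3) by simp
  also have "\<dots> \<le> t * ((\<mu> * \<nu>) ^ k * (2 * \<mu>)\<^sup>2)"
    using mn s1 t by (intro mult_left_mono power_mono) auto
  also have "\<dots> = (4 * (\<nu> / \<mu>) ^ k) * (t * \<mu> ^ Suc (Suc k) * \<mu> ^ k)"
    using mn(1) by (simp add: power_divide power_mult_distrib power2_eq_square field_simps)
  also have "\<dots> \<le> (4 * (\<nu> / \<mu>) ^ k) * (t * (s * fib_poly t (Suc (Suc k))) * (s * fib_poly t k))"
  proof -
    have "0 \<le> t * (s * fib_poly t (Suc (Suc k)))"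
      using l(1) mn(1) t by (meson less_imp_le order_trans zero_le_power mult_nonneg_nonneg)
    then show ?thesis
      using mult_mono[OF mult_left_mono[OF l(1)] l(2)] mn(1,2) t by (intro mult_left_mono) auto
  qed
  finally have "s\<^sup>2 * t ^ Suc k \<le> s\<^sup>2 * (4 * r ^ k * (w False False * w True True))"
    using block_weight_monos[of lam k, folded t_def w_def] mn(5) by (simp add: power2_eq_square mult_ac)
  then show "w False False * w True True - w False True * w True False \<le> 4 * r ^ k * (w False False * w True True)"
    unfolding det using s1 by simp
qed

lemma power_le_exp_corr_rate:
  fixes lam :: complex and M :: nat and d :: real
  assumes "lam \<noteq> 0" "d \<le> 6 * real M"
  defines "r \<equiv> (sqrt (1 + 4 * (cmod lam)\<^sup>2) - 1) / (sqrt (1 + 4 * (cmod lam)\<^sup>2) + 1)"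
  shows "r ^ M \<le> exp (- corr_rate lam * d / 2)" and "0 < r"
proof -
  define s where "s = sqrt (1 + 4 * (cmod lam)\<^sup>2)"
  have s1: "s > 1" unfolding s_def using assms(1) by simp
  then show r0: "0 < r" unfolding r_def s_def[symmetric] by simp
  have "r < 1" unfolding r_def s_def[symmetric] using s1 by simp
  then have lr: "ln r < 0" using r0 by simp
  have "corr_rate lam = (1/3) * ln (inverse r)"
    unfolding corr_rate_def r_def s_def[symmetric] by (simp add: add.commute s_def)
  then have eq: "- corr_rate lam * d / 2 = ln r * (d / 6)" using r0 by (simp add: ln_inverse)
  have le: "real M * ln r \<le> ln r * (d / 6)"
    using mult_left_mono_neg[of "d / 6" "real M" "ln r"] assms(2) lr by (simp add: mult.commute)
  have "r ^ M = exp (real M * ln r)" using r0 by (simp add: exp_of_nat_mult)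
  also have "\<dots> \<le> exp (- corr_rate lam * d / 2)" by (simp only: eq exp_le_cancel_iff le)
  finally show "r ^ M \<le> exp (- corr_rate lam * d / 2)" .
qed

lemma block_weight_det_bound:
  fixes lam :: complex and m :: nat and d :: real
  assumes lam: "lam \<noteq> 0" and B: "B = [Void] \<or> B = replicate m Mono" and m: "even m" "2 \<le> m"
    and d: "d \<le> 6 * real (m - 1)"
  defines "w \<equiv> block_weight lam B"
  obtains q where "0 \<le> q" "q \<le> 4 * exp (- corr_rate lam * d / 2)"
    "0 \<le> w False False * w True True - w False True * w True False"
    "w False False * w True True - w False True * w True False \<le> q * (w False False * w True True)"
proof (cases "B = [Void]")
  case True
  then show ?thesis using that[of 0] by (simp add: w_def block_weight_Void)
next
  case False
  define k where "k = m - 1"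
  define r where "r = (sqrt (1 + 4 * (cmod lam)\<^sup>2) - 1) / (sqrt (1 + 4 * (cmod lam)\<^sup>2) + 1)"
  have mk: "B = replicate (Suc k) Mono" "odd k" using False B m unfolding k_def by auto
  note rate = power_le_exp_corr_rate[OF lam d[folded k_def], folded r_def]
  show ?thesis
  proof (rule that[of "4 * r ^ k"])
    show "0 \<le> 4 * r ^ k" "4 * r ^ k \<le> 4 * exp (- corr_rate lam * d / 2)" using rate by auto
  qed (use monos_block_weight_det[OF lam mk(2), folded r_def] in \<open>simp_all add: w_def mk(1)\<close>)
qed

section \<open>A decoupling block between two separated intervals\<close>

lemma root_tiling_tiles_len: "root_tiling a b R \<Longrightarrow> tiles_len R = b - a + 1"
  unfolding root_tiling_def tiles_len_def by simp

lemma root_tiling_tlen_le: "root_tiling a b R \<Longrightarrow> t \<in> set R \<Longrightarrow> tlen t \<le> 5"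
  unfolding root_tiling_def in_set_conv_nth by (force simp: tlen_def)

lemma root_tiling_tile:
  assumes "root_tiling a b R" "R = xs @ t # ys" "xs \<noteq> []"
  shows "t \<in> {Void, Mono} \<or> (ys = [] \<and> tlen t \<le> 3)"
proof -
  have "length xs < length R" "R ! length xs = t" "length xs \<noteq> 0" using assms(2,3) by auto
  then have "t \<in> {Void, Mono} \<or> (length xs = length R - 1 \<and> t \<in> {RDimer, RMono1, RMono2})"
    using assms(1) unfolding root_tiling_def by metis
  then show ?thesis using assms(2) by (auto simp: tlen_def)
qed

lemma tiles_len_replicate_Mono: "tiles_len (replicate k Mono) = 3 * int k"
  by (induction k) (simp_all add: tiles_len_def tlen_def)

lemma tiles_prefix_crossing:
  assumes "\<forall>t\<in>set R. tlen t \<le> 5" "p \<le> x" "x < p + tiles_len R"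
  shows "\<exists>RL rest. R = RL @ rest \<and> RL \<noteq> [] \<and> x < p + tiles_len RL \<and> p + tiles_len RL \<le> x + 5"
  using assms
proof (induction R arbitrary: p)
  case (Cons t R)
  show ?case
  proof (cases "x < p + int (tlen t)")
    case True
    then have "t # R = [t] @ R" "x < p + tiles_len [t]" "p + tiles_len [t] \<le> x + 5"
      using Cons.prems by (auto simp: tiles_len_def)
    then show ?thesis by blast
  next
    case False
    then obtain RL rest where "R = RL @ rest" "x < p + int (tlen t) + tiles_len RL"
      "p + int (tlen t) + tiles_len RL \<le> x + 5"
      using Cons.IH[of "p + int (tlen t)"] Cons.prems by (auto simp: tiles_len_Cons add.assoc)
    then have "t # R = (t # RL) @ rest" "x < p + tiles_len (t # RL)" "p + tiles_len (t # RL) \<le> x + 5"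
      by (simp_all add: tiles_len_Cons add.assoc)
    then show ?thesis by blast
  qed
qed (simp add: tiles_len_def)

lemma Mono_prefix_cases:
  "(\<exists>ys. xs = replicate m Mono @ ys) \<or> (\<exists>k<m. \<exists>t ys. xs = replicate k Mono @ t # ys \<and> t \<noteq> Mono)
    \<or> (\<exists>k<m. xs = replicate k Mono)"
proof (induction xs arbitrary: m)
  case Nil
  show ?case
  proof (cases m)
    case (Suc m')
    then have "0 < m" "[] = replicate 0 Mono" by simp_all
    then show ?thesis by blast
  qed simp
next
  case (Cons t xs)
  show ?case
  proof (cases m)
    case 0
    then show ?thesis by simp
  next
    case (Suc m')
    show ?thesis
    proof (cases "t = Mono")
      case True
      have "replicate (Suc k) Mono @ zs = t # (replicate k Mono @ zs)" for k zs using True by simp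
      then show ?thesis using Cons.IH[of m'] Suc by (metis Suc_mono append.right_neutral)
    next
      case False
      then have "0 < m" "t # xs = replicate 0 Mono @ t # xs" using Suc by simp_all
      then show ?thesis using False by blast
    qed
  qed
qed

lemma root_tiling_block_between:
  assumes rt: "root_tiling a b R" and "a \<le> p2" "q1 \<le> b" "3 * int m \<le> q1 - p2 - 5"
  obtains RL B RR where "R = RL @ B @ RR" "RL \<noteq> []" "RR \<noteq> []" "p2 < a + tiles_len RL"
    "a + tiles_len RL + tiles_len B \<le> q1" "B = [Void] \<or> B = replicate m Mono"
proof -
  have total: "a + tiles_len R = b + 1" using root_tiling_tiles_len[OF rt] by simp
  have "\<forall>t\<in>set R. tlen t \<le> 5" "p2 < a + tiles_len R" using root_tiling_tlen_le[OF rt] total assms by auto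
  then obtain RL0 rest where R: "R = RL0 @ rest" and RL0: "RL0 \<noteq> []" "p2 < a + tiles_len RL0" "a + tiles_len RL0 \<le> p2 + 5"
    using tiles_prefix_crossing[of R a p2] assms(2) by auto
  consider (run) ys where "rest = replicate m Mono @ ys"
    | (stop) k t ys where "k < m" "rest = replicate k Mono @ t # ys" "t \<noteq> Mono"
    | (short) k where "k < m" "rest = replicate k Mono"
    using Mono_prefix_cases by blast
  then show ?thesis
  proof cases
    case run
    with R total assms have "ys \<noteq> []" using RL0
      by (auto simp: tiles_len_append tiles_len_replicate_Mono)
    then show ?thesis using that[of RL0 "replicate m Mono" ys] R run RL0 assms
      by (simp add: tiles_len_replicate_Mono)
  next
    case stop
    let ?RL = "RL0 @ replicate k Mono"
    have R': "R = ?RL @ t # ys" using R stop by simp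
    have pos: "a + tiles_len ?RL \<le> q1 - 3" using RL0 stop assms by (simp add: tiles_len_append tiles_len_replicate_Mono)
    have "ys \<noteq> []"
    proof
      assume "ys = []"
      then have "tlen t \<le> 3" using root_tiling_tile[OF rt R'] RL0(1) by (auto simp: tlen_def)
      then show False using total pos assms R' \<open>ys = []\<close> by (simp add: tiles_len_append tiles_len_Cons)
    qed
    then have "t = Void" using root_tiling_tile[OF rt R'] RL0(1) stop(3) by auto
    then show ?thesis using that[of ?RL "[Void]" ys] R' \<open>ys \<noteq> []\<close> RL0 pos
      by (simp add: tiles_len_append tiles_len_replicate_Mono tiles_len_def tlen_def)
  next
    case short
    then show ?thesis using R RL0 total assms by (simp add: tiles_len_append tiles_len_replicate_Mono)
  qed
qed

section \<open>Decay of correlations of even observables\<close>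

lemma covariance_bound_ordered:
  fixes a b p1 p2 q1 q2 D :: int and R :: "tile list" and lam :: complex
  assumes rt: "root_tiling a b R" and lam: "lam \<noteq> 0"
    and iv: "a \<le> p1" "p1 \<le> p2" "p2 + 20 \<le> q1" "q1 \<le> q2" "q2 \<le> b" and D: "D \<le> q1 - p2"
    and k: "local_kernel {p1..p2} AP KP" "local_kernel {q1..q2} AQ KQ"
  shows "cmod (omega lam a b R (AP \<circ> AQ) - omega lam a b R AP * omega lam a b R AQ)
           \<le> 8 * opnorm {a..b} AP * opnorm {a..b} AQ * exp (- corr_rate lam * real_of_int (D - 20) / 2)"
proof -
  let ?E = "exp (- corr_rate lam * real_of_int (D - 20) / 2)"
  define m where "m = 2 * nat ((q1 - p2 - 5) div 6)"
  have "6 * ((q1 - p2 - 5) div 6) \<le> q1 - p2 - 5" "q1 - p2 - 10 \<le> 6 * ((q1 - p2 - 5) div 6)"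
    "2 \<le> (q1 - p2 - 5) div 6" using iv(3) by presburger+
  then have m: "3 * int m \<le> q1 - p2 - 5" "4 \<le> m" "even m" "D - 20 \<le> 6 * (int m - 1)"
    using D unfolding m_def by auto
  have "a \<le> p2" "q1 \<le> b" using iv by auto
  then obtain RL B RR where R: "R = RL @ B @ RR" and ne: "RL \<noteq> []" "RR \<noteq> []"
    and pos: "p2 < a + tiles_len RL" "a + tiles_len RL + tiles_len B \<le> q1"
    and BB: "B = [Void] \<or> B = replicate m Mono"
    by (rule root_tiling_block_between[OF rt _ _ m(1)])
  have b: "b = a + tiles_len (RL @ B @ RR) - 1" using root_tiling_tiles_len[OF rt] R by simp
  have B: "B \<noteq> []" "set B \<subseteq> {Mono, Void}" using BB m(2) by auto
  have PQ: "{p1..p2} \<subseteq> {a..<a + tiles_len RL}" "{q1..q2} \<subseteq> {a + tiles_len RL + tiles_len B..b}"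
    using iv pos by auto
  have d: "real_of_int (D - 20) \<le> 6 * real (m - 1)" using m(2,4) by (simp add: of_nat_diff)
  obtain q where q: "0 \<le> q" "q \<le> 4 * ?E"
    and det: "0 \<le> block_weight lam B False False * block_weight lam B True True
        - block_weight lam B False True * block_weight lam B True False"
      "block_weight lam B False False * block_weight lam B True True
        - block_weight lam B False True * block_weight lam B True False
        \<le> q * (block_weight lam B False False * block_weight lam B True True)"
    by (rule block_weight_det_bound[OF lam BB m(3) _ d]) (use m(2) in simp)
  have "cmod (omega lam a b R (AP \<circ> AQ) - omega lam a b R AP * omega lam a b R AQ)
      \<le> opnorm {a..b} AP * opnorm {a..b} AQ * q"
    unfolding R b using omega_covariance_block_le[OF ne(1) B(1) ne(2) B(2) PQ[unfolded b] k]
      det q(1) by blast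
  also have "\<dots> \<le> opnorm {a..b} AP * opnorm {a..b} AQ * (8 * ?E)"
  proof -
    have "q \<le> 8 * ?E" using q(2) exp_gt_zero[of "- corr_rate lam * real_of_int (D - 20) / 2"] by linarith
    then show ?thesis using opnorm_local_nonneg[OF k(1)] opnorm_local_nonneg[OF k(2)] iv
      by (intro mult_left_mono) auto
  qed
  finally show ?thesis by (simp add: mult_ac)
qed

lemma omega_comp_commute:
  assumes "local_kernel X A1 K1" "local_kernel Y A2 K2" "X \<inter> Y = {}" "finite X" "finite Y"
  shows "omega lam a b R (A1 \<circ> A2) = omega lam a b R (A2 \<circ> A1)"
proof -
  have "(A1 \<circ> A2) \<psi> S = (A2 \<circ> A1) \<psi> S" if "S \<in> Pow {a..b}" for \<psi> S
    using local_kernel_comp_commute[OF assms] that finite_subset by blast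
  then show ?thesis unfolding omega_def finner_def by simp
qed

lemma set_dist_intervals_cases:
  fixes x1 x2 y1 y2 :: int
  assumes "x1 \<le> x2" "y1 \<le> y2" "set_dist {x1..x2} {y1..y2} \<ge> 20"
  shows "(x2 + 20 \<le> y1 \<and> set_dist {x1..x2} {y1..y2} \<le> y1 - x2)
       \<or> (y2 + 20 \<le> x1 \<and> set_dist {x1..x2} {y1..y2} \<le> x1 - y2)"
proof -
  have "{\<bar>x - y\<bar> | x y. x \<in> {x1..x2} \<and> y \<in> {y1..y2}} = (\<lambda>p. \<bar>fst p - snd p\<bar>) ` ({x1..x2} \<times> {y1..y2})"
    by force
  then have le: "set_dist {x1..x2} {y1..y2} \<le> \<bar>x - y\<bar>" if "x \<in> {x1..x2}" "y \<in> {y1..y2}" for x y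
    unfolding set_dist_def using that by (intro Min_le) auto
  show ?thesis
    using le[of x2 y1] le[of x1 y2] le[of "max x1 y1" "max x1 y1"] assms by (cases "x2 < y1"; cases "y2 < x1") auto
qed

lemma even_covariance_bound:
  fixes x1 x2 y1 y2 :: int
  assumes "x1 \<le> x2" "y1 \<le> y2" "{x1..x2} \<subseteq> {a..b}" "{y1..y2} \<subseteq> {a..b}"
    and sep: "set_dist {x1..x2} {y1..y2} \<ge> 20" and rt: "root_tiling a b R" and lam: "lam \<noteq> 0"
    and A: "A1 \<in> obs_even {x1..x2}" "A2 \<in> obs_even {y1..y2}"
  shows "cmod (omega lam a b R (A1 \<circ> A2) - omega lam a b R A1 * omega lam a b R A2)
    \<le> 8 * opnorm {a..b} A1 * opnorm {a..b} A2
        * exp (- corr_rate lam * real_of_int (set_dist {x1..x2} {y1..y2} - 20) / 2)"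
proof -
  obtain K1 K2 where k: "local_kernel {x1..x2} A1 K1" "local_kernel {y1..y2} A2 K2"
    using obs_even_local_kernel A by metis
  from set_dist_intervals_cases[OF assms(1,2) sep] show ?thesis
  proof
    assume "x2 + 20 \<le> y1 \<and> set_dist {x1..x2} {y1..y2} \<le> y1 - x2"
    then show ?thesis using covariance_bound_ordered[OF rt lam _ _ _ _ _ _ k] assms(1-4) by auto
  next
    assume c: "y2 + 20 \<le> x1 \<and> set_dist {x1..x2} {y1..y2} \<le> x1 - y2"
    then have "omega lam a b R (A1 \<circ> A2) = omega lam a b R (A2 \<circ> A1)"
      using omega_comp_commute[OF k] by auto
    then show ?thesis using covariance_bound_ordered[OF rt lam _ _ _ _ _ _ k(2,1)] assms(1-4) c
      by (auto simp: mult_ac)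
  qed
qed

section \<open>Vanishing of odd expectations\<close>

lemma card_Int_eq_ordered:
  assumes rt: "root_tiling a b R" and iv: "a \<le> p2" "p2 + 8 \<le> q1" "q1 \<le> b"
    and ss: "ss \<in> root_roles R" "ss' \<in> root_roles R"
    and eq: "config a R ss - ({p1..p2} \<union> {q1..q2}) = config a R ss' - ({p1..p2} \<union> {q1..q2})"
  shows "card (config a R ss \<inter> {p1..p2}) = card (config a R ss' \<inter> {p1..p2})
    \<and> card (config a R ss \<inter> {q1..q2}) = card (config a R ss' \<inter> {q1..q2})"
proof -
  obtain RL B RR where R: "R = RL @ B @ RR" and ne: "RL \<noteq> []" "RR \<noteq> []"
    and pos: "p2 < a + tiles_len RL" "a + tiles_len RL + tiles_len B \<le> q1"
    and BB: "B = [Void] \<or> B = replicate 1 Mono"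
    by (rule root_tiling_block_between[OF rt iv(1) iv(3), of 1]) (use iv(2) in simp)
  have B: "B \<noteq> []" "set B \<subseteq> {Mono, Void}" using BB by auto
  have "{p1..p2} \<subseteq> {..<a + tiles_len RL}" "{q1..q2} \<subseteq> {a + tiles_len RL + tiles_len B..}"
    using pos by auto
  from block_card_Int_eq[OF B this ne] show ?thesis using ss eq unfolding R by blast
qed

lemma separated_card_Int_eq:
  fixes x1 x2 y1 y2 :: int
  assumes "x1 \<le> x2" "y1 \<le> y2" "{x1..x2} \<subseteq> {a..b}" "{y1..y2} \<subseteq> {a..b}"
    and sep: "set_dist {x1..x2} {y1..y2} \<ge> 20" and rt: "root_tiling a b R"
    and ss: "ss \<in> root_roles R" "ss' \<in> root_roles R"
    and eq: "config a R ss - ({x1..x2} \<union> {y1..y2}) = config a R ss' - ({x1..x2} \<union> {y1..y2})"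
  shows "card (config a R ss \<inter> {x1..x2}) = card (config a R ss' \<inter> {x1..x2})"
  using set_dist_intervals_cases[OF assms(1,2) sep]
proof
  assume "x2 + 20 \<le> y1 \<and> set_dist {x1..x2} {y1..y2} \<le> y1 - x2"
  then show ?thesis using card_Int_eq_ordered[OF rt _ _ _ ss eq] assms(1-4) by auto
next
  assume "y2 + 20 \<le> x1 \<and> set_dist {x1..x2} {y1..y2} \<le> x1 - y2"
  then show ?thesis using card_Int_eq_ordered[OF rt _ _ _ ss, of y2 x1 y1 x2] eq assms(1-4)
    by (auto simp: Un_commute)
qed

lemma odd_expectations_eq_0:
  fixes x1 x2 y1 y2 :: int
  assumes "x1 \<le> x2" "y1 \<le> y2" and XL: "{x1..x2} \<subseteq> {a..b}" and YL: "{y1..y2} \<subseteq> {a..b}"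
    and sep: "set_dist {x1..x2} {y1..y2} \<ge> 20" and rt: "root_tiling a b R"
    and A: "A1 \<in> obs_odd {x1..x2}" "A2 \<in> obs_alg {y1..y2}"
  shows "omega lam a b R (A1 \<circ> A2) = 0 \<and> omega lam a b R A1 = 0"
proof -
  let ?X = "{x1..x2}" and ?Y = "{y1..y2}" and ?\<psi> = "vmd_state lam a R"
  have fin: "finite {a..b}" by simp
  have disj: "?X \<inter> ?Y = {}" using set_dist_intervals_cases[OF assms(1,2) sep] by auto
  note card_eq = separated_card_Int_eq[OF assms(1-4) sep rt]
  have cf: "\<forall>v\<in>root_roles R. config a R v \<subseteq> {a..b}"
    using config_range[OF roles_ok_fits] root_tiling_tiles_len[OF rt] unfolding root_roles_def by fastforce
  note zero = finner_op_word_odd_eq_0[OF fin _ _ _ _ finite_root_roles cf vmd_state_config_sum]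
  have "finner {a..b} ?\<psi> (A1 ?\<psi>) = 0"
  proof (rule finner_op_span_eq_0[OF A(1)[unfolded obs_odd_def]])
    fix u assume u: "word_in ?X u \<and> odd (length u)"
    show "finner {a..b} ?\<psi> (op_word u ?\<psi>) = 0"
    proof (rule zero[OF XL subset_refl])
      fix v v' assume "v \<in> root_roles R" "v' \<in> root_roles R" "config a R v - ?X = config a R v' - ?X"
      then show "card (config a R v \<inter> ?X) = card (config a R v' \<inter> ?X)"
        by (intro card_Int_eq_if_Diff_eq finite_config) (simp_all add: card_config_root_roles)
    qed (use u letters_in_word_in in auto)
  qed
  moreover have "finner {a..b} ?\<psi> ((A1 \<circ> A2) ?\<psi>) = 0"
  proof (rule finner_op_span_comp_eq_0[OF A(1)[unfolded obs_odd_def] A(2)[unfolded obs_alg_def]])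
    fix u v assume u: "word_in ?X u \<and> odd (length u)" and v: "word_in ?Y v"
    have "word_in (?X \<union> ?Y) (u @ v)" using u v by (auto simp: word_in_def)
    moreover have "odd (letters_in ?X (u @ v))"
      using u letters_in_word_in letters_in_disjoint[OF v disj] by (simp add: letters_in_append)
    ultimately show "finner {a..b} ?\<psi> (op_word (u @ v) ?\<psi>) = 0"
      using zero[of "?X \<union> ?Y" ?X] XL YL card_eq by blast
  qed auto
  ultimately show ?thesis unfolding omega_def by simp
qed

theorem theorem1p5:
  fixes a b x1 x2 y1 y2 :: int and R :: "tile list" and lam :: complex and \<kappa> :: real
  assumes "x1 \<le> x2" and "y1 \<le> y2"
    and "{x1..x2} \<subseteq> {a..b}" and "{y1..y2} \<subseteq> {a..b}"
    and "set_dist {x1..x2} {y1..y2} \<ge> 20"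
    and "root_tiling a b R"
    and "lam \<noteq> 0" and "\<kappa> > 0"
  shows "(\<forall>A1\<in>obs_even {x1..x2}. \<forall>A2\<in>obs_even {y1..y2}.
            cmod (omega lam a b R (A1 \<circ> A2) - omega lam a b R A1 * omega lam a b R A2)
            \<le> 8 * opnorm {a..b} A1 * opnorm {a..b} A2
                * exp (- corr_rate lam * real_of_int (set_dist {x1..x2} {y1..y2} - 20) / 2))
       \<and> (\<forall>A1\<in>obs_odd {x1..x2}. \<forall>A2\<in>obs_alg {y1..y2}.
            omega lam a b R (A1 \<circ> A2) = 0 \<and> omega lam a b R A1 = 0)"
proof (intro conjI ballI)
  fix A1 A2 assume "A1 \<in> obs_even {x1..x2}" "A2 \<in> obs_even {y1..y2}"
  then show "cmod (omega lam a b R (A1 \<circ> A2) - omega lam a b R A1 * omega lam a b R A2)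
            \<le> 8 * opnorm {a..b} A1 * opnorm {a..b} A2
                * exp (- corr_rate lam * real_of_int (set_dist {x1..x2} {y1..y2} - 20) / 2)"
    using even_covariance_bound assms(1-7) by blast
next
  fix A1 A2 assume "A1 \<in> obs_odd {x1..x2}" "A2 \<in> obs_alg {y1..y2}"
  then show "omega lam a b R (A1 \<circ> A2) = 0" "omega lam a b R A1 = 0"
    using odd_expectations_eq_0 assms(1-6) by blast+
qed

end
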